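(* Let $\omega$ be a primitive third root of unity, $S=\mathbb{C}\langle x,y,z\rangle/(x^2,y^2,z^2)$, and for $t\in\mathbb{C}^*$ let $T_t$ be the quotient of $S$ by the two-sided ideal generated by $(zxy+\omega xyz+\omega^2 yzx)+t(yxz+\omega zyx+\omega^2 xzy)$ and $(zxy+\omega^2 xyz+\omega yzx)+t(yxz+\omega^2 zyx+\omega xzy)$. Let $n\ge 2$ and let $\lambda$ be a primitive $n$th root of unity. Then the PI-degree of $T_{-\lambda}$ is $2n$.
   Context: For an algebra $A$ that is a finite module over its center (a prime PI algebra), the PI-degree is the maximal dimension of a simple (finite-dimensional) representation, equivalently the generic rank $m$ such that $A$ embeds in $m\times m$ matrices over a commutative ring and satisfies the standard identity of $M_m$. *)

theory Defs
  imports Complex_Main "Jordan_Normal_Form.Matrix"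
begin

text \<open>Noncommutative polynomials in the letters x = 0, y = 1, z = 2 are written as
  formal linear combinations of words: lists of (coefficient, word) pairs.\<close>

type_synonym ncpoly = "(complex \<times> nat list) list"

definition word_eval :: "nat \<Rightarrow> (nat \<Rightarrow> complex mat) \<Rightarrow> nat list \<Rightarrow> complex mat" where
  "word_eval m A w = foldr (\<lambda>i M. A i * M) w (1\<^sub>m m)"

definition nc_eval :: "nat \<Rightarrow> (nat \<Rightarrow> complex mat) \<Rightarrow> ncpoly \<Rightarrow> complex mat" where
  "nc_eval m A p = foldr (\<lambda>(c, w) M. c \<cdot>\<^sub>m word_eval m A w + M) p (0\<^sub>m m m)"

definition S_rels :: "ncpoly list" where
  "S_rels = [[(1, [0,0])], [(1, [1,1])], [(1, [2,2])]]"

definition T_rel1 :: "complex \<Rightarrow> complex \<Rightarrow> ncpoly" where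
  "T_rel1 \<omega> t = [(1, [2,0,1]), (\<omega>, [0,1,2]), (\<omega>^2, [1,2,0]),
                   (t, [1,0,2]), (t * \<omega>, [2,1,0]), (t * \<omega>^2, [0,2,1])]"

definition T_rel2 :: "complex \<Rightarrow> complex \<Rightarrow> ncpoly" where
  "T_rel2 \<omega> t = [(1, [2,0,1]), (\<omega>^2, [0,1,2]), (\<omega>, [1,2,0]),
                   (t, [1,0,2]), (t * \<omega>^2, [2,1,0]), (t * \<omega>, [0,2,1])]"

definition T_rels :: "complex \<Rightarrow> complex \<Rightarrow> ncpoly list" where
  "T_rels \<omega> t = S_rels @ [T_rel1 \<omega> t, T_rel2 \<omega> t]"

text \<open>An m-dimensional representation of T_t = C<x,y,z>/(relations): by the universal
  property of the presented algebra, this is an assignment of m x m complex matrices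
  A 0, A 1, A 2 to x, y, z that kills every defining relation.\<close>
definition T_rep :: "complex \<Rightarrow> complex \<Rightarrow> nat \<Rightarrow> (nat \<Rightarrow> complex mat) \<Rightarrow> bool" where
  "T_rep \<omega> t m A \<longleftrightarrow> (\<forall>i<3. A i \<in> carrier_mat m m) \<and>
                       (\<forall>r\<in>set (T_rels \<omega> t). nc_eval m A r = 0\<^sub>m m m)"

definition is_subspace :: "nat \<Rightarrow> complex vec set \<Rightarrow> bool" where
  "is_subspace m V \<longleftrightarrow> V \<subseteq> carrier_vec m \<and> 0\<^sub>v m \<in> V \<and>
     (\<forall>u\<in>V. \<forall>v\<in>V. u + v \<in> V) \<and> (\<forall>c. \<forall>u\<in>V. c \<cdot>\<^sub>v u \<in> V)"

definition simple_rep :: "nat \<Rightarrow> (nat \<Rightarrow> complex mat) \<Rightarrow> bool" where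
  "simple_rep m A \<longleftrightarrow> 0 < m \<and>
     (\<forall>V. is_subspace m V \<and> (\<forall>i<3. \<forall>v\<in>V. A i *\<^sub>v v \<in> V) \<longrightarrow>
          V = {0\<^sub>v m} \<or> V = carrier_vec m)"

definition T_PI_degree :: "complex \<Rightarrow> complex \<Rightarrow> nat" where
  "T_PI_degree \<omega> t = (GREATEST m. \<exists>A. T_rep \<omega> t m A \<and> simple_rep m A)"

end

theory Submission
  imports Defs "HOL-Library.Function_Algebras" "Jordan_Normal_Form.Spectral_Radius"
begin

text \<open>Upper bound: on a simple module the elements \<open>XY + \<lambda>YX\<close>, \<open>YZ + \<lambda>ZY\<close>, \<open>ZX + \<lambda>XZ\<close> are
  normal (they commute with the generators up to powers of \<open>\<lambda>\<close>), so by Schur's lemma each is zero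
  or invertible with scalar \<open>n\<close>-th power, and \<open>YZX - \<lambda>XZY\<close> is central, hence scalar. If, say,
  \<open>XY + \<lambda>YX\<close> is invertible, a Fourier average along one of its orbits in \<open>ker X\<close> gives an
  eigenvector \<open>v \<in> ker X\<close>; the vectors \<open>w\<^sub>j, Y w\<^sub>j\<close> (\<open>j < n\<close>), where \<open>w\<^sub>j\<close> runs along the
  orbit of \<open>v\<close> under \<open>ZX + \<lambda>XZ\<close> or \<open>YZ + \<lambda>ZY\<close>, then span a submodule, so the dimension is at
  most \<open>2n\<close>. If all three normal elements vanish, the generators have a common kernel vector.
  Lower bound: an explicit irreducible representation of dimension \<open>2n\<close>.\<close>

text \<open>\<open>\<complex>\<^sup>m\<close> is modelled by the coordinate functions vanishing from index \<open>m\<close> on, and linear maps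
  by operators on all of \<open>nat \<Rightarrow> complex\<close>; composition and pointwise algebra then need no
  dimension side conditions.\<close>

definition cvecs :: "nat \<Rightarrow> (nat \<Rightarrow> complex) set" where
  "cvecs m = {f. \<forall>i\<ge>m. f i = 0}"

definition fscale :: "complex \<Rightarrow> (nat \<Rightarrow> complex) \<Rightarrow> nat \<Rightarrow> complex" where
  "fscale c f = (\<lambda>i. c * f i)"

definition linear_op :: "((nat \<Rightarrow> complex) \<Rightarrow> nat \<Rightarrow> complex) \<Rightarrow> bool" where
  "linear_op C \<longleftrightarrow> (\<forall>f g. C (f + g) = C f + C g) \<and> (\<forall>c f. C (fscale c f) = fscale c (C f))"

definition fsubspace :: "nat \<Rightarrow> (nat \<Rightarrow> complex) set \<Rightarrow> bool" where
  "fsubspace m W \<longleftrightarrow> W \<subseteq> cvecs m \<and> 0 \<in> W \<and> (\<forall>f\<in>W. \<forall>g\<in>W. f + g \<in> W) \<and>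
     (\<forall>c. \<forall>f\<in>W. fscale c f \<in> W)"

definition lin_comb :: "(nat \<Rightarrow> complex) \<Rightarrow> (nat \<Rightarrow> complex) list \<Rightarrow> nat \<Rightarrow> complex" where
  "lin_comb c gs = (\<Sum>k<length gs. fscale (c k) (gs ! k))"

definition lin_span :: "(nat \<Rightarrow> complex) list \<Rightarrow> (nat \<Rightarrow> complex) set" where
  "lin_span gs = range (\<lambda>c. lin_comb c gs)"

definition unit_fun :: "nat \<Rightarrow> nat \<Rightarrow> complex" where
  "unit_fun j = (\<lambda>k. if k = j then 1 else 0)"

lemma fscale_apply [simp]: "fscale c f i = c * f i"
  by (simp add: fscale_def)

lemma fscale_zero_right [simp]: "fscale c 0 = 0"
  by (simp add: fun_eq_iff)

lemma fscale_zero_left [simp]: "fscale 0 f = 0"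
  by (simp add: fun_eq_iff)

lemma fscale_one [simp]: "fscale 1 f = f"
  by (simp add: fun_eq_iff)

lemma fscale_fscale [simp]: "fscale c (fscale d f) = fscale (c * d) f"
  by (simp add: fun_eq_iff)

lemma fscale_add: "fscale c (f + g) = fscale c f + fscale c g"
  by (simp add: fun_eq_iff algebra_simps)

lemma fscale_eq_iff_inverse: "fscale c f = h \<Longrightarrow> c \<noteq> 0 \<Longrightarrow> f = fscale (inverse c) h"
  by (auto simp: fun_eq_iff field_simps)

lemma fscale_eq_zero_iff: "fscale c f = 0 \<longleftrightarrow> c = 0 \<or> f = 0"
  by (auto simp: fun_eq_iff)

lemma sum_fun_apply: "(\<Sum>k\<in>S. h k) i = (\<Sum>k\<in>S. h k i)"
  by (induct S rule: infinite_finite_induct) auto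

lemma linear_op_add: "linear_op C \<Longrightarrow> C (f + g) = C f + C g"
  by (simp add: linear_op_def)

lemma linear_op_fscale: "linear_op C \<Longrightarrow> C (fscale c f) = fscale c (C f)"
  by (simp add: linear_op_def)

lemma linear_op_zero: "linear_op C \<Longrightarrow> C 0 = 0"
  using linear_op_fscale[of C 0 0] by simp

lemma linear_op_diff: "linear_op C \<Longrightarrow> C (f - g) = C f - C g"
  by (metis add_diff_cancel_right' diff_add_cancel linear_op_add)

lemma linear_op_sum: "linear_op C \<Longrightarrow> C (\<Sum>k\<in>S. h k) = (\<Sum>k\<in>S. C (h k))"
  by (induct S rule: infinite_finite_induct) (auto simp: linear_op_zero linear_op_add)

lemma linear_op_funpow: "linear_op C \<Longrightarrow> linear_op (C ^^ k)"
  by (induct k) (auto simp: linear_op_def)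

lemma funpow_twisted_commute:
  assumes "linear_op B" "\<And>f. A (B f) = fscale c (B (A f))"
  shows "A ((B ^^ k) f) = fscale (c ^ k) ((B ^^ k) (A f))"
proof (induct k)
  case (Suc k)
  have "A ((B ^^ Suc k) f) = fscale c (B (A ((B ^^ k) f)))" by (simp add: assms(2))
  also have "\<dots> = fscale c (B (fscale (c ^ k) ((B ^^ k) (A f))))" by (simp only: Suc)
  also have "\<dots> = fscale (c ^ Suc k) ((B ^^ Suc k) (A f))"
    by (simp add: linear_op_fscale[OF assms(1)] mult.commute)
  finally show ?case .
qed simp

lemma funpow_closed: "f \<in> S \<Longrightarrow> (\<And>f. f \<in> S \<Longrightarrow> C f \<in> S) \<Longrightarrow> (C ^^ k) f \<in> S"
  by (induct k) auto

lemma funpow_injective: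
  assumes "\<forall>f\<in>S. C f = 0 \<longrightarrow> f = 0" "\<And>f. f \<in> S \<Longrightarrow> C f \<in> S"
  shows "f \<in> S \<Longrightarrow> (C ^^ k) f = 0 \<Longrightarrow> f = 0"
proof (induct k arbitrary: f)
  case (Suc k)
  have "(C ^^ k) (C f) = 0" using Suc(3) by (metis funpow_Suc_right comp_apply)
  thus ?case using Suc assms by blast
qed simp

lemma square_zero_kernel_nonzero:
  assumes "\<And>f. f \<in> S \<Longrightarrow> C f \<in> S" "\<And>f. C (C f) = 0" "u \<in> S" "u \<noteq> 0"
  obtains v where "v \<in> S" "v \<noteq> 0" "C v = 0"
  using assms by (cases "C u = 0") metis+

lemma zero_in_cvecs [simp]: "0 \<in> cvecs m"
  by (simp add: cvecs_def)

lemma cvecs_add: "f \<in> cvecs m \<Longrightarrow> g \<in> cvecs m \<Longrightarrow> f + g \<in> cvecs m"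
  by (simp add: cvecs_def)

lemma cvecs_diff: "f \<in> cvecs m \<Longrightarrow> g \<in> cvecs m \<Longrightarrow> f - g \<in> cvecs m"
  by (simp add: cvecs_def)

lemma cvecs_fscale: "f \<in> cvecs m \<Longrightarrow> fscale c f \<in> cvecs m"
  by (simp add: cvecs_def)

lemma cvecs_sum: "(\<And>k. k \<in> S \<Longrightarrow> h k \<in> cvecs m) \<Longrightarrow> (\<Sum>k\<in>S. h k) \<in> cvecs m"
  by (induct S rule: infinite_finite_induct) (auto simp: cvecs_add)

lemma unit_fun_in_cvecs: "j < m \<Longrightarrow> unit_fun j \<in> cvecs m"
  by (simp add: unit_fun_def cvecs_def)

lemma unit_fun_nonzero: "unit_fun j \<noteq> 0"
  by (metis unit_fun_def zero_fun_def zero_neq_one)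

lemma cvecs_nonzero_elem: "0 < m \<Longrightarrow> \<exists>u\<in>cvecs m. u \<noteq> 0"
  using unit_fun_in_cvecs unit_fun_nonzero by blast

lemma cvecs_unit_expansion: "f \<in> cvecs m \<Longrightarrow> f = (\<Sum>j<m. fscale (f j) (unit_fun j))"
proof (rule ext)
  fix i assume f: "f \<in> cvecs m"
  have "(\<Sum>j<m. fscale (f j) (unit_fun j)) i = (\<Sum>j<m. if j = i then f i else 0)"
    unfolding sum_fun_apply by (rule sum.cong) (auto simp: unit_fun_def)
  thus "f i = (\<Sum>j<m. fscale (f j) (unit_fun j)) i"
    using f by (auto simp: cvecs_def)
qed

lemma fsubspace_sum: "fsubspace m W \<Longrightarrow> (\<And>k. k \<in> S \<Longrightarrow> h k \<in> W) \<Longrightarrow> (\<Sum>k\<in>S. h k) \<in> W"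
  by (induct S rule: infinite_finite_induct) (auto simp: fsubspace_def)

lemma fsubspace_cvecs_subset:
  assumes "fsubspace m W" "\<And>j. j < m \<Longrightarrow> unit_fun j \<in> W"
  shows "cvecs m \<subseteq> W"
proof
  fix u assume "u \<in> cvecs m"
  hence "u = (\<Sum>j<m. fscale (u j) (unit_fun j))" by (rule cvecs_unit_expansion)
  also have "\<dots> \<in> W" using assms by (intro fsubspace_sum) (auto simp: fsubspace_def)
  finally show "u \<in> W" .
qed

lemma lin_comb_add: "lin_comb c gs + lin_comb d gs = lin_comb (\<lambda>k. c k + d k) gs"
  by (simp add: lin_comb_def fun_eq_iff sum_fun_apply sum.distrib distrib_right)

lemma lin_comb_fscale: "fscale a (lin_comb c gs) = lin_comb (\<lambda>k. a * c k) gs"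
  by (simp add: lin_comb_def fun_eq_iff sum_fun_apply sum_distrib_left mult.assoc)

lemma lin_span_zero: "0 \<in> lin_span gs"
proof -
  have "lin_comb (\<lambda>k. 0) gs = 0" by (simp add: lin_comb_def fun_eq_iff sum_fun_apply)
  thus ?thesis unfolding lin_span_def by (metis rangeI)
qed

lemma lin_span_add: "f \<in> lin_span gs \<Longrightarrow> g \<in> lin_span gs \<Longrightarrow> f + g \<in> lin_span gs"
  unfolding lin_span_def by (auto simp: lin_comb_add)

lemma lin_span_fscale: "f \<in> lin_span gs \<Longrightarrow> fscale a f \<in> lin_span gs"
  unfolding lin_span_def by (auto simp: lin_comb_fscale)

lemma lin_span_diff: "f \<in> lin_span gs \<Longrightarrow> g \<in> lin_span gs \<Longrightarrow> f - g \<in> lin_span gs"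
proof -
  assume "f \<in> lin_span gs" "g \<in> lin_span gs"
  hence "f + fscale (-1) g \<in> lin_span gs" by (intro lin_span_add lin_span_fscale)
  moreover have "f + fscale (-1) g = f - g" by (simp add: fun_eq_iff)
  ultimately show ?thesis by simp
qed

lemma lin_span_sum: "(\<And>k. k \<in> S \<Longrightarrow> h k \<in> lin_span gs) \<Longrightarrow> (\<Sum>k\<in>S. h k) \<in> lin_span gs"
  by (induct S rule: infinite_finite_induct) (auto simp: lin_span_zero lin_span_add)

lemma lin_span_superset: "g \<in> set gs \<Longrightarrow> g \<in> lin_span gs"
proof -
  assume "g \<in> set gs"
  then obtain k where k: "k < length gs" "gs ! k = g" by (auto simp: in_set_conv_nth)
  have "lin_comb (\<lambda>j. if j = k then 1 else 0) gs = g"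
  proof (rule ext)
    fix i
    have "lin_comb (\<lambda>j. if j = k then 1 else 0) gs i = (\<Sum>j<length gs. if j = k then g i else 0)"
      unfolding lin_comb_def sum_fun_apply by (rule sum.cong) (auto simp: k)
    thus "lin_comb (\<lambda>j. if j = k then 1 else 0) gs i = g i" using k by simp
  qed
  thus ?thesis unfolding lin_span_def by (metis rangeI)
qed

lemma lin_span_subset_cvecs: "set gs \<subseteq> cvecs m \<Longrightarrow> lin_span gs \<subseteq> cvecs m"
  unfolding lin_span_def lin_comb_def by (auto intro!: cvecs_sum cvecs_fscale)

lemma fsubspace_lin_span: "set gs \<subseteq> cvecs m \<Longrightarrow> fsubspace m (lin_span gs)"
  unfolding fsubspace_def
  using lin_span_subset_cvecs lin_span_zero lin_span_add lin_span_fscale by blast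

lemma linear_op_lin_span:
  assumes "linear_op F" "\<forall>g\<in>set gs. F g \<in> lin_span gs" "f \<in> lin_span gs"
  shows "F f \<in> lin_span gs"
proof -
  obtain c where f: "f = lin_comb c gs" using assms(3) unfolding lin_span_def by auto
  have "F f = (\<Sum>k<length gs. fscale (c k) (F (gs ! k)))"
    unfolding f lin_comb_def by (simp add: linear_op_sum[OF assms(1)] linear_op_fscale[OF assms(1)])
  also have "\<dots> \<in> lin_span gs" using assms(2) by (intro lin_span_sum lin_span_fscale) auto
  finally show ?thesis .
qed

definition chain_list ::
    "(nat \<Rightarrow> nat \<Rightarrow> complex) \<Rightarrow> ((nat \<Rightarrow> complex) \<Rightarrow> nat \<Rightarrow> complex) \<Rightarrow> nat \<Rightarrow> (nat \<Rightarrow> complex) list"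
  where "chain_list w Y n = map w [0..<n] @ map (\<lambda>j. Y (w j)) [0..<n]"

lemma set_chain_list: "g \<in> set (chain_list w Y n) \<Longrightarrow> \<exists>j<n. g = w j \<or> g = Y (w j)"
  by (auto simp: chain_list_def)

lemma periodic_chain_in_lin_span:
  assumes "\<And>j. w (j + n) = fscale p (w j)" "linear_op Y" "0 < n"
  shows "w j \<in> lin_span (chain_list w Y n) \<and> Y (w j) \<in> lin_span (chain_list w Y n)"
proof (induct j rule: less_induct)
  case (less j)
  show ?case
  proof (cases "j < n")
    case True
    thus ?thesis by (auto intro!: lin_span_superset simp: chain_list_def)
  next
    case False
    then obtain i where j: "j = i + n" by (metis add.commute le_add_diff_inverse not_less)
    hence "w i \<in> lin_span (chain_list w Y n) \<and> Y (w i) \<in> lin_span (chain_list w Y n)"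
      using less assms(3) by simp
    thus ?thesis
      unfolding j assms(1) linear_op_fscale[OF assms(2)] by (metis lin_span_fscale)
  qed
qed

definition mat_op :: "nat \<Rightarrow> complex mat \<Rightarrow> (nat \<Rightarrow> complex) \<Rightarrow> nat \<Rightarrow> complex" where
  "mat_op m A f = (\<lambda>i. if i < m then (\<Sum>j<m. A $$ (i,j) * f j) else 0)"

definition vec_to_fun :: "nat \<Rightarrow> complex vec \<Rightarrow> nat \<Rightarrow> complex" where
  "vec_to_fun m u = (\<lambda>i. if i < m then u $ i else 0)"

lemma mat_op_mult:
  assumes "A \<in> carrier_mat m m" "B \<in> carrier_mat m m"
  shows "mat_op m (A * B) f = mat_op m A (mat_op m B f)"
proof (rule ext)
  fix i
  show "mat_op m (A * B) f i = mat_op m A (mat_op m B f) i"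
  proof (cases "i < m")
    case True
    have "mat_op m (A * B) f i = (\<Sum>j<m. (\<Sum>k<m. A $$ (i,k) * B $$ (k,j)) * f j)"
      using True assms by (simp add: mat_op_def scalar_prod_def lessThan_atLeast0)
    also have "\<dots> = (\<Sum>k<m. A $$ (i,k) * (\<Sum>j<m. B $$ (k,j) * f j))"
      by (simp add: sum_distrib_left sum_distrib_right mult.assoc, rule sum.swap)
    also have "\<dots> = mat_op m A (mat_op m B f) i"
      using True by (simp add: mat_op_def)
    finally show ?thesis .
  qed (simp add: mat_op_def)
qed

lemma mat_op_add:
  "A \<in> carrier_mat m m \<Longrightarrow> B \<in> carrier_mat m m \<Longrightarrow> mat_op m (A + B) f = mat_op m A f + mat_op m B f"
  by (auto simp: mat_op_def fun_eq_iff distrib_right sum.distrib)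

lemma mat_op_smult: "A \<in> carrier_mat m m \<Longrightarrow> mat_op m (c \<cdot>\<^sub>m A) f = fscale c (mat_op m A f)"
  by (auto simp: mat_op_def fun_eq_iff sum_distrib_left mult.assoc)

lemma mat_op_zero_mat: "mat_op m (0\<^sub>m m m) f = 0"
  by (auto simp: mat_op_def fun_eq_iff)

lemma mat_op_in_cvecs: "mat_op m A f \<in> cvecs m"
  by (auto simp: mat_op_def cvecs_def)

lemma linear_op_mat_op: "linear_op (mat_op m A)"
  unfolding linear_op_def
  by (simp add: mat_op_def fun_eq_iff sum.distrib sum_distrib_left algebra_simps)

lemma mat_op_eq_zero_imp:
  assumes "A \<in> carrier_mat m m" "\<And>f. mat_op m A f = 0"
  shows "A = 0\<^sub>m m m"
proof (rule eq_matI)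
  fix i j assume ij: "i < dim_row (0\<^sub>m m m :: complex mat)" "j < dim_col (0\<^sub>m m m :: complex mat)"
  have "A $$ (i,j) = mat_op m A (unit_fun j) i"
    using ij by (simp add: mat_op_def unit_fun_def if_distrib cong: if_cong)
  thus "A $$ (i,j) = 0\<^sub>m m m $$ (i,j)" using ij assms(2) by simp
qed (use assms in auto)

lemma mult_mat_vec_eq_mat_op: "A \<in> carrier_mat m m \<Longrightarrow> A *\<^sub>v vec m f = vec m (mat_op m A f)"
  by (rule eq_vecI) (auto simp: mat_op_def scalar_prod_def lessThan_atLeast0)

lemma vec_to_fun_in_cvecs: "vec_to_fun m u \<in> cvecs m"
  by (simp add: vec_to_fun_def cvecs_def)

lemma vec_vec_to_fun: "u \<in> carrier_vec m \<Longrightarrow> vec m (vec_to_fun m u) = u"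
  by (auto simp: vec_to_fun_def)

lemma vec_to_fun_vec: "f \<in> cvecs m \<Longrightarrow> vec_to_fun m (vec m f) = f"
  by (auto simp: vec_to_fun_def cvecs_def fun_eq_iff)

lemma vec_cvecs_inj: "f \<in> cvecs m \<Longrightarrow> g \<in> cvecs m \<Longrightarrow> vec m f = vec m g \<Longrightarrow> f = g"
  by (metis vec_to_fun_vec)

lemma vec_zero_fun: "vec m 0 = (0\<^sub>v m :: complex vec)"
  by (rule eq_vecI) auto

lemma vec_add_fun: "vec m (f + g) = vec m f + (vec m g :: complex vec)"
  by (rule eq_vecI) auto

lemma vec_fscale: "vec m (fscale c f) = c \<cdot>\<^sub>v vec m f"
  by (rule eq_vecI) auto

lemma all_less_three: "(\<forall>i<3. P i) \<longleftrightarrow> P 0 \<and> P 1 \<and> P (2::nat)"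
  by (auto simp: numeral_3_eq_3 numeral_2_eq_2 less_Suc_eq)

lemma simple_rep_fsubspace_trivial:
  assumes simple: "simple_rep m A" and A: "\<forall>i<3. A i \<in> carrier_mat m m"
    and W: "fsubspace m W" "\<forall>i<3. \<forall>f\<in>W. mat_op m (A i) f \<in> W"
  shows "W = {0} \<or> W = cvecs m"
proof -
  have WC: "W \<subseteq> cvecs m" using W by (simp add: fsubspace_def)
  let ?V = "vec m ` W"
  have "is_subspace m ?V" unfolding is_subspace_def
  proof (intro conjI ballI allI)
    show "0\<^sub>v m \<in> ?V" using W vec_zero_fun unfolding fsubspace_def by (metis image_eqI)
  next
    fix u v assume "u \<in> ?V" "v \<in> ?V"
    thus "u + v \<in> ?V" using W by (auto simp: fsubspace_def simp flip: vec_add_fun)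
  next
    fix c u assume "u \<in> ?V"
    thus "c \<cdot>\<^sub>v u \<in> ?V" using W by (auto simp: fsubspace_def simp flip: vec_fscale)
  qed auto
  moreover have "\<forall>i<3. \<forall>v\<in>?V. A i *\<^sub>v v \<in> ?V"
    using W A by (auto simp: mult_mat_vec_eq_mat_op)
  ultimately have "?V = {0\<^sub>v m} \<or> ?V = carrier_vec m" using simple by (simp add: simple_rep_def)
  thus ?thesis
  proof
    assume "?V = {0\<^sub>v m}"
    hence "f = 0" if "f \<in> W" for f
      using that WC vec_zero_fun vec_cvecs_inj[of f m 0] by auto
    thus ?thesis using W by (auto simp: fsubspace_def)
  next
    assume V: "?V = carrier_vec m"
    have "g \<in> W" if "g \<in> cvecs m" for g
    proof -
      obtain f where "f \<in> W" "vec m g = vec m f" using V by (metis vec_carrier imageE)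
      thus ?thesis using that WC vec_cvecs_inj by blast
    qed
    thus ?thesis using WC by auto
  qed
qed

lemma simple_repI_fsubspaces:
  assumes A: "\<forall>i<3. A i \<in> carrier_mat m m" and m: "0 < m"
    and triv: "\<And>W. fsubspace m W \<Longrightarrow> \<forall>i<3. \<forall>f\<in>W. mat_op m (A i) f \<in> W \<Longrightarrow>
                 W = {0} \<or> W = cvecs m"
  shows "simple_rep m A"
  unfolding simple_rep_def
proof (intro conjI allI impI)
  fix V assume V: "is_subspace m V \<and> (\<forall>i<3. \<forall>v\<in>V. A i *\<^sub>v v \<in> V)"
  define W where "W = {f \<in> cvecs m. vec m f \<in> V}"
  have "fsubspace m W" using V
    by (auto simp: fsubspace_def is_subspace_def W_def vec_zero_fun vec_add_fun vec_fscale
        cvecs_add cvecs_fscale)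
  moreover have "\<forall>i<3. \<forall>f\<in>W. mat_op m (A i) f \<in> W"
    using V A by (auto simp: W_def mat_op_in_cvecs simp flip: mult_mat_vec_eq_mat_op)
  ultimately have W_triv: "W = {0} \<or> W = cvecs m" by (rule triv)
  have VC: "V \<subseteq> carrier_vec m" "0\<^sub>v m \<in> V" using V by (auto simp: is_subspace_def)
  show "V = {0\<^sub>v m} \<or> V = carrier_vec m"
    using W_triv
  proof
    assume "W = {0}"
    have "u = 0\<^sub>v m" if u: "u \<in> V" for u
    proof -
      have "u \<in> carrier_vec m" using u VC by blast
      moreover have "vec_to_fun m u \<in> W"
        using u calculation vec_vec_to_fun vec_to_fun_in_cvecs unfolding W_def by simp
      ultimately show ?thesis using \<open>W = {0}\<close> vec_vec_to_fun vec_zero_fun by force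
    qed
    thus ?thesis using VC by blast
  next
    assume "W = cvecs m"
    have "u \<in> V" if u: "u \<in> carrier_vec m" for u
    proof -
      have "vec m (vec_to_fun m u) \<in> V"
        using \<open>W = cvecs m\<close> vec_to_fun_in_cvecs unfolding W_def by blast
      thus ?thesis using vec_vec_to_fun[OF u] by simp
    qed
    thus ?thesis using VC by blast
  qed
qed (rule m)

lemma linear_op_eigenvector_exists:
  assumes m: "0 < m" and C: "linear_op C" "\<And>f. C f \<in> cvecs m"
  shows "\<exists>c g. g \<in> cvecs m \<and> g \<noteq> 0 \<and> C g = fscale c g"
proof -
  define Cm :: "complex mat" where "Cm = mat m m (\<lambda>(i,j). C (unit_fun j) i)"
  have Cc: "Cm \<in> carrier_mat m m" by (simp add: Cm_def)
  obtain c where "c \<in> spectrum Cm" using spectrum_non_empty[OF Cc m] by blast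
  then obtain v where "eigenvector Cm v c" unfolding spectrum_def eigenvalue_def by auto
  hence v: "v \<in> carrier_vec m" "v \<noteq> 0\<^sub>v m" "Cm *\<^sub>v v = c \<cdot>\<^sub>v v"
    unfolding eigenvector_def using Cc by auto
  define g where "g = vec_to_fun m v"
  have gF: "g \<in> cvecs m" by (simp add: g_def vec_to_fun_in_cvecs)
  have gnz: "g \<noteq> 0" using v vec_vec_to_fun vec_zero_fun by (metis g_def)
  have "C g = (\<Sum>j<m. fscale (g j) (C (unit_fun j)))"
    by (subst cvecs_unit_expansion[OF gF]) (simp add: linear_op_sum[OF C(1)] linear_op_fscale[OF C(1)])
  hence Cg: "C g i = (\<Sum>j<m. C (unit_fun j) i * v $ j)" for i
    by (auto simp: sum_fun_apply g_def vec_to_fun_def mult.commute intro!: sum.cong)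
  have "C g i = fscale c g i" for i
  proof (cases "i < m")
    case True
    have "(Cm *\<^sub>v v) $ i = (\<Sum>j<m. C (unit_fun j) i * v $ j)"
      using True v(1) by (simp add: Cm_def scalar_prod_def lessThan_atLeast0)
    thus ?thesis using v(3) True v(1) Cg by (simp add: g_def vec_to_fun_def)
  next
    case False
    thus ?thesis using C(2)[of g] gF by (simp add: cvecs_def)
  qed
  thus ?thesis using gF gnz by blast
qed

lemma cvecs_subset_lin_span_imp_le_length:
  assumes "cvecs m \<subseteq> lin_span gs"
  shows "m \<le> length gs"
proof (rule ccontr)
  define k where "k = length gs"
  assume "\<not> m \<le> length gs"
  hence km: "k < m" by (simp add: k_def)
  have "\<exists>c. j < m \<longrightarrow> unit_fun j = lin_comb c gs" for j
    using assms unit_fun_in_cvecs unfolding lin_span_def by blast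
  then obtain cf where cf: "\<And>j. j < m \<Longrightarrow> unit_fun j = lin_comb (cf j) gs" by metis
  define G :: "complex mat" where "G = mat m m (\<lambda>(i,l). if l < k then (gs ! l) i else 0)"
  define Cm :: "complex mat" where "Cm = mat m m (\<lambda>(l,j). if l < k then cf j l else 0)"
  have GC: "G \<in> carrier_mat m m" "Cm \<in> carrier_mat m m" by (simp_all add: G_def Cm_def)
  have "G * Cm = 1\<^sub>m m"
  proof (rule eq_matI)
    fix i j assume "i < dim_row (1\<^sub>m m :: complex mat)" "j < dim_col (1\<^sub>m m :: complex mat)"
    hence ij: "i < m" "j < m" by auto
    have "(G * Cm) $$ (i, j) = (\<Sum>l\<in>{..<m}. if l < k then (gs ! l) i * cf j l else 0)"
      using ij by (simp add: G_def Cm_def scalar_prod_def lessThan_atLeast0 if_distrib cong: if_cong)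
    also have "\<dots> = (\<Sum>l\<in>{..<m} \<inter> {..<k}. (gs ! l) i * cf j l)"
      by (simp add: sum.inter_restrict)
    also have "{..<m} \<inter> {..<k} = {..<k}" using km by auto
    also have "(\<Sum>l<k. (gs ! l) i * cf j l) = lin_comb (cf j) gs i"
      by (simp add: lin_comb_def k_def sum_fun_apply mult.commute)
    also have "\<dots> = 1\<^sub>m m $$ (i, j)" using cf[OF ij(2), symmetric] ij by (simp add: unit_fun_def)
    finally show "(G * Cm) $$ (i, j) = 1\<^sub>m m $$ (i, j)" .
  qed (simp_all add: G_def Cm_def)
  hence "Cm * G = 1\<^sub>m m" by (rule mat_mult_left_right_inverse[OF GC(1) GC(2)])
  moreover have "(Cm * G) $$ (m - 1, m - 1) = 0"
    using km by (simp add: G_def Cm_def scalar_prod_def)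
  ultimately show False using km by simp
qed

section \<open>Roots of unity and discrete Fourier averaging\<close>

lemma sum_root_unity_powers:
  fixes la :: complex
  assumes "la ^ n = 1" "\<And>k. 0 < k \<Longrightarrow> k < n \<Longrightarrow> la ^ k \<noteq> 1" "0 < n"
  shows "(\<Sum>i<n. la ^ (d * i)) = (if n dvd d then of_nat n else 0)"
proof (cases "n dvd d")
  case True
  then obtain q where d: "d = n * q" by auto
  have "\<And>i. la ^ (d * i) = 1" unfolding d by (simp add: power_mult assms(1))
  thus ?thesis using True by simp
next
  case False
  define r where "r = la ^ d"
  have "la ^ d = la ^ (n * (d div n) + d mod n)" by simp
  also have "\<dots> = (la ^ n) ^ (d div n) * la ^ (d mod n)" by (simp only: power_add power_mult)
  finally have "la ^ d = la ^ (d mod n)" using assms(1) by simp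
  moreover have "0 < d mod n" "d mod n < n" using False assms(3) by (auto simp: dvd_eq_mod_eq_0)
  ultimately have r1: "r \<noteq> 1" using assms(2) r_def by auto
  have "r ^ n = (la ^ n) ^ d" unfolding r_def by (simp add: power_mult[symmetric] mult.commute)
  hence rn: "r ^ n = 1" using assms(1) by simp
  have "(\<Sum>i<n. la ^ (d * i)) = (\<Sum>i<n. r ^ i)" unfolding r_def by (simp add: power_mult)
  also have "\<dots> = (r ^ n - 1) / (r - 1)" using r1 by (rule geometric_sum)
  also have "\<dots> = 0" using rn by simp
  finally show ?thesis using False by simp
qed

lemma sum_power_shift:
  fixes g :: complex
  assumes "a (Suc p) = g ^ Suc p * a 0"
  shows "(\<Sum>k<Suc p. g ^ (p - k) * a (Suc k)) = g * (\<Sum>k<Suc p. g ^ (p - k) * a k)"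
proof -
  have "g * (\<Sum>k<Suc p. g ^ (p - k) * a k) = g * (g ^ p * a 0 + (\<Sum>k<p. g ^ (p - Suc k) * a (Suc k)))"
    by (simp only: sum.lessThan_Suc_shift) simp
  also have "\<dots> = g ^ Suc p * a 0 + (\<Sum>k<p. g * g ^ (p - Suc k) * a (Suc k))"
    by (simp add: distrib_left sum_distrib_left mult.assoc)
  also have "(\<Sum>k<p. g * g ^ (p - Suc k) * a (Suc k)) = (\<Sum>k<p. g ^ (p - k) * a (Suc k))"
    by (rule sum.cong) (auto simp flip: power_Suc simp: Suc_diff_Suc)
  finally show ?thesis using assms by simp
qed

lemma sum_roots_power_average:
  fixes la \<beta> :: complex
  assumes la: "la ^ n = 1" "\<And>k. 0 < k \<Longrightarrow> k < n \<Longrightarrow> la ^ k \<noteq> 1" and np: "n = Suc p"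
  shows "(\<Sum>i<n. \<Sum>k<n. (\<beta> * la ^ i) ^ (p - k) * a k) = of_nat n * a p"
proof -
  have "(\<Sum>i<n. \<Sum>k<n. (\<beta> * la ^ i) ^ (p - k) * a k) = (\<Sum>k<n. \<Sum>i<n. (\<beta> * la ^ i) ^ (p - k) * a k)"
    by (rule sum.swap)
  also have "\<dots> = (\<Sum>k<n. \<beta> ^ (p - k) * a k * (\<Sum>i<n. la ^ ((p - k) * i)))"
    by (rule sum.cong)
      (simp_all add: power_mult_distrib power_mult[symmetric] sum_distrib_left mult_ac)
  also have "\<dots> = (\<Sum>k<n. if k = p then of_nat n * a p else 0)"
  proof (rule sum.cong)
    fix k assume k: "k \<in> {..<n}"
    have "n dvd (p - k) \<longleftrightarrow> k = p" using k np by (auto dest: dvd_imp_le)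
    moreover have "0 < n" using np by simp
    ultimately show "\<beta> ^ (p - k) * a k * (\<Sum>i<n. la ^ ((p - k) * i)) =
        (if k = p then of_nat n * a p else 0)"
      by (auto simp: sum_root_unity_powers[OF la])
  qed simp
  finally show ?thesis using np by simp
qed

text \<open>If \<open>C\<^sup>n u = \<mu> u\<close> with \<open>\<mu> \<noteq> 0\<close>, the discrete Fourier transforms
  \<open>v\<^sub>i = \<Sum>\<^sub>k \<gamma>\<^sub>i\<^bsup>n-1-k\<^esup> C\<^sup>k u\<close> along the orbit, for the \<open>n\<close> roots \<open>\<gamma>\<^sub>i\<close> of \<open>\<mu>\<close>,
  are eigenvectors of \<open>C\<close>; they sum to \<open>n C\<^bsup>n-1\<^esup> u\<close>, so one of them is nonzero.\<close>

lemma orbit_eigenvector: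
  fixes la \<mu> :: complex
  assumes C: "linear_op C"
    and la: "la ^ n = 1" "\<And>k. 0 < k \<Longrightarrow> k < n \<Longrightarrow> la ^ k \<noteq> 1" and n: "0 < n"
    and mu: "(C ^^ n) u = fscale \<mu> u" "\<mu> \<noteq> 0" and last_nonzero: "(C ^^ (n - 1)) u \<noteq> 0"
  obtains v c \<gamma> where "v = (\<Sum>k<n. fscale (c k) ((C ^^ k) u))" "v \<noteq> 0" "C v = fscale \<gamma> v" "\<gamma> \<noteq> 0"
proof -
  obtain \<beta> where \<beta>: "\<beta> ^ n = \<mu>"
  proof -
    obtain c where "bij_betw (\<lambda>z. c * z) {z::complex. z ^ n = 1} {z. z ^ n = \<mu>}"
      using bij_betw_nth_root_unity[OF mu(2) n] by blast
    hence "c * 1 \<in> {z. z ^ n = \<mu>}" using bij_betwE by fastforce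
    thus ?thesis using that by auto
  qed
  define a where "a k = (C ^^ k) u" for k
  define \<gamma> where "\<gamma> i = \<beta> * la ^ i" for i
  have \<gamma>n: "\<gamma> i ^ n = \<mu>" for i
  proof -
    have "(la ^ i) ^ n = (la ^ n) ^ i" by (simp flip: power_mult add: mult.commute)
    thus ?thesis using \<beta> la(1) by (simp add: \<gamma>_def power_mult_distrib)
  qed
  obtain p where np: "n = Suc p" using n by (cases n) auto
  define v where "v i = (\<Sum>k<n. fscale (\<gamma> i ^ (p - k)) (a k))" for i
  have eigen: "C (v i) = fscale (\<gamma> i) (v i)" for i
  proof (rule ext)
    fix x
    have "C (v i) = (\<Sum>k<n. fscale (\<gamma> i ^ (p - k)) (a (Suc k)))"
      by (simp add: v_def linear_op_sum[OF C] linear_op_fscale[OF C] a_def)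
    hence "C (v i) x = (\<Sum>k<Suc p. \<gamma> i ^ (p - k) * (\<lambda>k. a k x) (Suc k))"
      by (simp add: sum_fun_apply np)
    also have "\<dots> = \<gamma> i * (\<Sum>k<Suc p. \<gamma> i ^ (p - k) * (\<lambda>k. a k x) k)"
    proof (rule sum_power_shift)
      have "a (Suc p) x = \<mu> * u x" using mu(1) np by (simp add: a_def)
      thus "(\<lambda>k. a k x) (Suc p) = \<gamma> i ^ Suc p * (\<lambda>k. a k x) 0" using \<gamma>n[of i] np by (simp add: a_def)
    qed
    also have "\<dots> = fscale (\<gamma> i) (v i) x" by (simp add: v_def sum_fun_apply np)
    finally show "C (v i) x = fscale (\<gamma> i) (v i) x" .
  qed
  have "(\<Sum>i<n. v i) = fscale (of_nat n) (a p)"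
    using sum_roots_power_average[OF la np, of \<beta>]
    by (simp add: fun_eq_iff v_def \<gamma>_def sum_fun_apply)
  moreover have "fscale (of_nat n) (a p) \<noteq> 0"
    using last_nonzero n np by (simp add: a_def fscale_eq_zero_iff del: of_nat_Suc)
  ultimately obtain i where "v i \<noteq> 0" by (metis sum.neutral)
  moreover have "\<gamma> i \<noteq> 0" using \<gamma>n[of i] mu(2) n by (metis power_0_left not_gr0)
  ultimately show ?thesis using that[of "v i" "\<lambda>k. \<gamma> i ^ (p - k)" "\<gamma> i"] eigen
    by (simp add: v_def a_def)
qed

section \<open>Simple modules of \<open>T\<^sub>-\<^sub>\<lambda>\<close> have dimension at most \<open>2n\<close>\<close>

text \<open>A simple module of dimension \<open>m\<close> over \<open>T\<^sub>-\<^sub>\<lambda>\<close>: the generators act by square-zero operators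
  \<open>X, Y, Z\<close> on \<open>\<complex>\<^sup>m\<close>, and the two cubic relations enter in their \<open>\<omega>\<close>-free form, the
  commutation rules \<open>[Z, XY + \<lambda>YX] = [X, YZ + \<lambda>ZY] = [Y, ZX + \<lambda>XZ] = 0\<close>.\<close>

locale simple_T_module =
  fixes m n :: nat and la :: complex and X Y Z :: "(nat \<Rightarrow> complex) \<Rightarrow> nat \<Rightarrow> complex"
  assumes linear_X: "linear_op X" and linear_Y: "linear_op Y" and linear_Z: "linear_op Z"
    and X_in_cvecs: "\<And>f. X f \<in> cvecs m" and Y_in_cvecs: "\<And>f. Y f \<in> cvecs m"
    and Z_in_cvecs: "\<And>f. Z f \<in> cvecs m"
    and X_square: "\<And>f. X (X f) = 0" and Y_square: "\<And>f. Y (Y f) = 0" and Z_square: "\<And>f. Z (Z f) = 0"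
    and rel_Z: "\<And>f. Z (X (Y f) + fscale la (Y (X f))) = X (Y (Z f)) + fscale la (Y (X (Z f)))"
    and rel_X: "\<And>f. X (Y (Z f) + fscale la (Z (Y f))) = Y (Z (X f)) + fscale la (Z (Y (X f)))"
    and rel_Y: "\<And>f. Y (Z (X f) + fscale la (X (Z f))) = Z (X (Y f)) + fscale la (X (Z (Y f)))"
    and la_root: "la ^ n = 1" and la_primitive: "\<And>k. 0 < k \<Longrightarrow> k < n \<Longrightarrow> la ^ k \<noteq> 1"
    and n_pos: "0 < n" and m_pos: "0 < m"
    and simple: "\<And>W. fsubspace m W \<Longrightarrow> \<forall>f\<in>W. X f \<in> W \<and> Y f \<in> W \<and> Z f \<in> W \<Longrightarrow>
                   W = {0} \<or> W = cvecs m"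
begin

lemmas linear_X_simps [simp] =
  linear_op_add[OF linear_X] linear_op_fscale[OF linear_X] linear_op_zero[OF linear_X]
  linear_op_diff[OF linear_X]
lemmas linear_Y_simps [simp] =
  linear_op_add[OF linear_Y] linear_op_fscale[OF linear_Y] linear_op_zero[OF linear_Y]
  linear_op_diff[OF linear_Y]
lemmas linear_Z_simps [simp] =
  linear_op_add[OF linear_Z] linear_op_fscale[OF linear_Z] linear_op_zero[OF linear_Z]
  linear_op_diff[OF linear_Z]
lemmas squares_zero [simp] = X_square Y_square Z_square

lemma rotate: "simple_T_module m n la Y Z X"
proof unfold_locales
  fix W assume "fsubspace m W" "\<forall>f\<in>W. Y f \<in> W \<and> Z f \<in> W \<and> X f \<in> W"
  thus "W = {0} \<or> W = cvecs m" using simple by blast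
qed (fact linear_X linear_Y linear_Z X_in_cvecs Y_in_cvecs Z_in_cvecs X_square Y_square Z_square
       rel_X rel_Y rel_Z la_root la_primitive n_pos m_pos)+

lemma la_nonzero: "la \<noteq> 0"
  using la_root n_pos by (metis power_0_left not_gr0 zero_neq_one)

lemma inverse_la_root: "inverse la ^ n = 1"
  using la_root by (simp add: power_inverse)

definition "Nxy f = X (Y f) + fscale la (Y (X f))"
definition "Nyz f = Y (Z f) + fscale la (Z (Y f))"
definition "Nzx f = Z (X f) + fscale la (X (Z f))"
definition "Kc f = Y (Z (X f)) - fscale la (X (Z (Y f)))"

lemma rotate_Nxy: "simple_T_module.Nxy la Y Z = Nyz"
  by (rule ext) (simp add: simple_T_module.Nxy_def[OF rotate] Nyz_def)

lemma rotate_Nyz: "simple_T_module.Nyz la Z X = Nzx"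
  by (rule ext) (simp add: simple_T_module.Nyz_def[OF rotate] Nzx_def)

lemma linear_Nxy: "linear_op Nxy"
  unfolding linear_op_def Nxy_def by (simp add: fscale_add fun_eq_iff algebra_simps)
lemma linear_Nyz: "linear_op Nyz"
  unfolding linear_op_def Nyz_def by (simp add: fscale_add fun_eq_iff algebra_simps)
lemma linear_Nzx: "linear_op Nzx"
  unfolding linear_op_def Nzx_def by (simp add: fscale_add fun_eq_iff algebra_simps)
lemma linear_Kc: "linear_op Kc"
  unfolding linear_op_def Kc_def by (simp add: fscale_add fun_eq_iff algebra_simps)

lemma Nxy_in_cvecs: "Nxy f \<in> cvecs m"
  unfolding Nxy_def by (intro cvecs_add cvecs_fscale X_in_cvecs Y_in_cvecs)
lemma Nyz_in_cvecs: "Nyz f \<in> cvecs m"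
  unfolding Nyz_def by (intro cvecs_add cvecs_fscale Y_in_cvecs Z_in_cvecs)
lemma Nzx_in_cvecs: "Nzx f \<in> cvecs m"
  unfolding Nzx_def by (intro cvecs_add cvecs_fscale Z_in_cvecs X_in_cvecs)
lemma Kc_in_cvecs: "Kc f \<in> cvecs m"
  unfolding Kc_def by (intro cvecs_diff cvecs_fscale Y_in_cvecs X_in_cvecs)

lemma Z_Nxy: "Z (Nxy f) = Nxy (Z f)" using rel_Z by (simp add: Nxy_def)
lemma X_Nyz: "X (Nyz f) = Nyz (X f)" using rel_X by (simp add: Nyz_def)
lemma Y_Nzx: "Y (Nzx f) = Nzx (Y f)" using rel_Y by (simp add: Nzx_def)
lemma X_Nxy: "X (Nxy f) = fscale la (Nxy (X f))" by (simp add: Nxy_def)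
lemma Nxy_Y: "Nxy (Y f) = fscale la (Y (Nxy f))" by (simp add: Nxy_def)
lemma Y_Nyz: "Y (Nyz f) = fscale la (Nyz (Y f))" by (simp add: Nyz_def)
lemma Nyz_Z: "Nyz (Z f) = fscale la (Z (Nyz f))" by (simp add: Nyz_def)
lemma Z_Nzx: "Z (Nzx f) = fscale la (Nzx (Z f))" by (simp add: Nzx_def)
lemma Nzx_X: "Nzx (X f) = fscale la (X (Nzx f))" by (simp add: Nzx_def)

lemma Y_Nxy: "Y (Nxy f) = fscale (inverse la) (Nxy (Y f))"
  using Nxy_Y[of f] la_nonzero by simp
lemma Z_Nyz: "Z (Nyz f) = fscale (inverse la) (Nyz (Z f))"
  using Nyz_Z[of f] la_nonzero by simp
lemma X_Nzx: "X (Nzx f) = fscale (inverse la) (Nzx (X f))"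
  using Nzx_X[of f] la_nonzero by simp

lemma X_Kc: "X (Kc f) = Kc (X f)"
proof -
  have "X (Y (Z (X f))) + fscale la (X (Z (Y (X f)))) = 0"
    using X_Nyz[of "X f"] by (simp add: Nyz_def)
  thus ?thesis unfolding Kc_def by (simp add: add_eq_0_iff2)
qed

lemma Y_Kc: "Y (Kc f) = Kc (Y f)"
proof (rule ext)
  fix i
  have "Y (Z (X (Y f))) i + la * Y (X (Z (Y f))) i = 0"
    using fun_cong[OF Y_Nzx[of "Y f"]] by (simp add: Nzx_def)
  thus "Y (Kc f) i = Kc (Y f) i"
    unfolding Kc_def by (simp add: add_eq_0_iff2)
qed

lemma Z_Kc: "Z (Kc f) = Kc (Z f)"
proof (rule ext)
  fix i
  have "Z (X (Y (Z f))) i + la * Z (X (Z (Y f))) i = Z (Y (Z (X f))) i"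
    using fun_cong[OF arg_cong[OF X_Nyz[of f], of Z]] by (simp add: Nyz_def)
  moreover have "Y (Z (X (Z f))) i = Z (X (Y (Z f))) i + la * X (Z (Y (Z f))) i"
    using fun_cong[OF Y_Nzx[of "Z f"]] by (simp add: Nzx_def)
  ultimately show "Z (Kc f) i = Kc (Z f) i"
    unfolding Kc_def by simp (metis add_diff_cancel_right')
qed

lemma Nxy_Nzx: "Nxy (Nzx f) = fscale (inverse la) (Nzx (Nxy f))"
proof -
  have "Nxy (Nzx f) = X (Nzx (Y f)) + fscale la (Y (X (Nzx f)))" by (simp add: Nxy_def Y_Nzx)
  also have "\<dots> = fscale (inverse la) (Nzx (X (Y f))) + fscale la (Y (fscale (inverse la) (Nzx (X f))))"
    by (simp only: X_Nzx)
  also have "\<dots> = fscale (inverse la) (Nzx (X (Y f))) + Nzx (Y (X f))"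
    using la_nonzero by (simp add: Y_Nzx)
  also have "\<dots> = fscale (inverse la) (Nzx (Nxy f))"
    using la_nonzero
    by (simp add: Nxy_def linear_op_add[OF linear_Nzx] linear_op_fscale[OF linear_Nzx] fscale_add)
  finally show ?thesis .
qed

lemma Nxy_Nyz: "Nxy (Nyz f) = fscale la (Nyz (Nxy f))"
proof -
  have "Nxy (Nyz f) = X (Y (Nyz f)) + fscale la (Y (X (Nyz f)))" by (simp add: Nxy_def)
  also have "\<dots> = X (fscale la (Nyz (Y f))) + fscale la (Y (Nyz (X f)))" by (simp add: Y_Nyz X_Nyz)
  also have "\<dots> = fscale la (Nyz (X (Y f))) + fscale la (fscale la (Nyz (Y (X f))))"
    by (simp add: X_Nyz Y_Nyz)
  also have "\<dots> = fscale la (Nyz (Nxy f))"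
    by (simp add: Nxy_def linear_op_add[OF linear_Nyz] linear_op_fscale[OF linear_Nyz] fscale_add)
  finally show ?thesis .
qed

lemma scalar_if_commutes:
  assumes C: "linear_op C" "\<And>f. C f \<in> cvecs m"
    and comm: "\<And>f. X (C f) = C (X f)" "\<And>f. Y (C f) = C (Y f)" "\<And>f. Z (C f) = C (Z f)"
  shows "\<exists>c. \<forall>f\<in>cvecs m. C f = fscale c f"
proof -
  obtain c g where g: "g \<in> cvecs m" "g \<noteq> 0" "C g = fscale c g"
    using linear_op_eigenvector_exists[OF m_pos C] by blast
  define W where "W = {f \<in> cvecs m. C f = fscale c f}"
  have "fsubspace m W" unfolding fsubspace_def W_def
    by (auto simp: linear_op_zero[OF C(1)] linear_op_add[OF C(1)] linear_op_fscale[OF C(1)]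
        cvecs_add cvecs_fscale fscale_add mult.commute)
  moreover have "\<forall>f\<in>W. X f \<in> W \<and> Y f \<in> W \<and> Z f \<in> W"
    unfolding W_def by (auto simp: X_in_cvecs Y_in_cvecs Z_in_cvecs simp flip: comm)
  ultimately have "W = {0} \<or> W = cvecs m" by (rule simple)
  moreover have "g \<in> W" using g by (simp add: W_def)
  ultimately have "W = cvecs m" using g(2) by blast
  thus ?thesis unfolding W_def by auto
qed

lemma zero_or_injective_if_twisted:
  assumes C: "linear_op C" "\<And>f. C f \<in> cvecs m"
    and twist: "\<And>f. C (X f) = fscale a (X (C f))" "\<And>f. C (Y f) = fscale b (Y (C f))"
      "\<And>f. C (Z f) = fscale c (Z (C f))"
  shows "(\<forall>f\<in>cvecs m. C f = 0) \<or> (\<forall>f\<in>cvecs m. C f = 0 \<longrightarrow> f = 0)"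
proof -
  define W where "W = {f \<in> cvecs m. C f = 0}"
  have "fsubspace m W" unfolding fsubspace_def W_def
    by (auto simp: linear_op_zero[OF C(1)] linear_op_add[OF C(1)] linear_op_fscale[OF C(1)]
        cvecs_add cvecs_fscale)
  moreover have "\<forall>f\<in>W. X f \<in> W \<and> Y f \<in> W \<and> Z f \<in> W"
    unfolding W_def by (auto simp: X_in_cvecs Y_in_cvecs Z_in_cvecs twist)
  ultimately have "W = {0} \<or> W = cvecs m" by (rule simple)
  thus ?thesis unfolding W_def by auto
qed

lemma power_scalar_if_twisted:
  assumes B: "linear_op B" "\<And>f. B f \<in> cvecs m"
    and twist: "\<And>f. X (B f) = fscale a (B (X f))" "\<And>f. Y (B f) = fscale b (B (Y f))"
      "\<And>f. Z (B f) = fscale c (B (Z f))"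
    and roots: "a ^ n = 1" "b ^ n = 1" "c ^ n = 1"
  shows "\<exists>\<mu>. \<forall>f\<in>cvecs m. (B ^^ n) f = fscale \<mu> f"
proof (rule scalar_if_commutes)
  show "linear_op (B ^^ n)" by (rule linear_op_funpow[OF B(1)])
  show "(B ^^ n) f \<in> cvecs m" for f
    using B(2) n_pos by (cases n) simp_all
  show "X ((B ^^ n) f) = (B ^^ n) (X f)" "Y ((B ^^ n) f) = (B ^^ n) (Y f)"
    "Z ((B ^^ n) f) = (B ^^ n) (Z f)" for f
    using funpow_twisted_commute[where A = X and B = B, OF B(1) twist(1)]
      funpow_twisted_commute[where A = Y and B = B, OF B(1) twist(2)]
      funpow_twisted_commute[where A = Z and B = B, OF B(1) twist(3)] roots by simp_all
qed

lemma Nxy_power_scalar: "\<exists>\<mu>. \<forall>f\<in>cvecs m. (Nxy ^^ n) f = fscale \<mu> f"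
  by (rule power_scalar_if_twisted[where B = Nxy and c = 1, OF linear_Nxy Nxy_in_cvecs X_Nxy Y_Nxy])
    (simp_all add: Z_Nxy la_root inverse_la_root)

lemma Nyz_power_scalar: "\<exists>\<mu>. \<forall>f\<in>cvecs m. (Nyz ^^ n) f = fscale \<mu> f"
  by (rule power_scalar_if_twisted[where B = Nyz and a = 1, OF linear_Nyz Nyz_in_cvecs _ Y_Nyz Z_Nyz])
    (simp_all add: X_Nyz la_root inverse_la_root)

lemma Nzx_power_scalar: "\<exists>\<mu>. \<forall>f\<in>cvecs m. (Nzx ^^ n) f = fscale \<mu> f"
  by (rule power_scalar_if_twisted[where B = Nzx and b = 1, OF linear_Nzx Nzx_in_cvecs X_Nzx _ Z_Nzx])
    (simp_all add: Y_Nzx la_root inverse_la_root)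

lemma Kc_scalar: "\<exists>\<kappa>. \<forall>f\<in>cvecs m. Kc f = fscale \<kappa> f"
  by (rule scalar_if_commutes[OF linear_Kc Kc_in_cvecs]) (simp_all add: X_Kc Y_Kc Z_Kc)

lemma Nxy_zero_or_injective: "(\<forall>f\<in>cvecs m. Nxy f = 0) \<or> (\<forall>f\<in>cvecs m. Nxy f = 0 \<longrightarrow> f = 0)"
  by (rule zero_or_injective_if_twisted[where a = "inverse la" and b = la and c = 1,
        OF linear_Nxy Nxy_in_cvecs])
    (use X_Nxy Nxy_Y Z_Nxy la_nonzero in simp_all)

lemma Nzx_zero_or_injective: "(\<forall>f\<in>cvecs m. Nzx f = 0) \<or> (\<forall>f\<in>cvecs m. Nzx f = 0 \<longrightarrow> f = 0)"
  by (rule zero_or_injective_if_twisted[where a = la and b = 1 and c = "inverse la",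
        OF linear_Nzx Nzx_in_cvecs])
    (use Nzx_X Y_Nzx Z_Nzx la_nonzero in simp_all)

lemma dim_le_of_invariant_list:
  assumes "set gs \<subseteq> cvecs m" "\<exists>g\<in>set gs. g \<noteq> 0"
    and invariant: "\<forall>g\<in>set gs. X g \<in> lin_span gs \<and> Y g \<in> lin_span gs \<and> Z g \<in> lin_span gs"
  shows "m \<le> length gs"
proof -
  have "fsubspace m (lin_span gs)" using assms(1) by (rule fsubspace_lin_span)
  moreover have "\<forall>f\<in>lin_span gs. X f \<in> lin_span gs \<and> Y f \<in> lin_span gs \<and> Z f \<in> lin_span gs"
    using invariant linear_X linear_Y linear_Z by (simp add: linear_op_lin_span)
  ultimately have "lin_span gs = {0} \<or> lin_span gs = cvecs m" by (rule simple)
  hence "cvecs m \<subseteq> lin_span gs" using assms(2) lin_span_superset by blast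
  thus ?thesis by (rule cvecs_subset_lin_span_imp_le_length)
qed

lemma Y_chain_lin_span:
  assumes "\<And>j. w (j + n) = fscale p (w j)" "f \<in> lin_span (chain_list w Y n)"
  shows "Y f \<in> lin_span (chain_list w Y n)"
proof (rule linear_op_lin_span[OF linear_Y _ assms(2)], rule ballI)
  fix h assume "h \<in> set (chain_list w Y n)"
  then obtain j where "h = w j \<or> h = Y (w j)" using set_chain_list by blast
  thus "Y h \<in> lin_span (chain_list w Y n)"
    using periodic_chain_in_lin_span[where w = w, OF assms(1) linear_Y n_pos] lin_span_zero by auto
qed

text \<open>An \<open>Nxy\<close>-eigenvector \<open>w\<close> in \<open>ker X\<close> satisfies \<open>XY w = g w\<close>, so \<open>w, Y w\<close> span an
  \<open>X, Y\<close>-stable plane; a periodic chain of such vectors whose span contains their images under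
  \<open>Z\<close> and \<open>Nyz = YZ + \<lambda>ZY\<close> is a submodule of dimension at most \<open>2n\<close>.\<close>

lemma dim_le_of_chain:
  assumes w: "\<And>j. w j \<in> cvecs m" "w 0 \<noteq> 0" "\<And>j. w (j + n) = fscale p (w j)"
      "\<And>j. X (w j) = 0" "\<And>j. Nxy (w j) = fscale (g j) (w j)"
    and Z_span: "\<And>j. Z (w j) \<in> lin_span (chain_list w Y n)"
    and Nyz_span: "\<And>j. Nyz (w j) \<in> lin_span (chain_list w Y n)"
  shows "m \<le> 2 * n"
proof -
  let ?S = "lin_span (chain_list w Y n)"
  have mem: "w j \<in> ?S \<and> Y (w j) \<in> ?S" for j
    by (rule periodic_chain_in_lin_span[where w = w and p = p, OF w(3) linear_Y n_pos])
  have ZY_span: "Z (Y (w j)) \<in> ?S" for j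
  proof -
    have "fscale la (Z (Y (w j))) = Nyz (w j) - Y (Z (w j))" by (simp add: Nyz_def)
    hence "Z (Y (w j)) = fscale (inverse la) (Nyz (w j) - Y (Z (w j)))"
      using la_nonzero by (rule fscale_eq_iff_inverse)
    thus ?thesis
      using Nyz_span Z_span Y_chain_lin_span[where w = w, OF w(3)] by (simp add: lin_span_diff lin_span_fscale)
  qed
  have "m \<le> length (chain_list w Y n)"
  proof (rule dim_le_of_invariant_list)
    show "set (chain_list w Y n) \<subseteq> cvecs m" using w(1) Y_in_cvecs by (auto simp: chain_list_def)
    show "\<exists>h\<in>set (chain_list w Y n). h \<noteq> 0" using n_pos w(2) by (force simp: chain_list_def)
    show "\<forall>h\<in>set (chain_list w Y n). X h \<in> ?S \<and> Y h \<in> ?S \<and> Z h \<in> ?S"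
    proof
      fix h assume "h \<in> set (chain_list w Y n)"
      then obtain j where "h = w j \<or> h = Y (w j)" using set_chain_list by blast
      moreover have "X (Y (w j)) = fscale (g j) (w j)" using w(4,5)[of j] by (simp add: Nxy_def)
      ultimately show "X h \<in> ?S \<and> Y h \<in> ?S \<and> Z h \<in> ?S"
        using mem w(4) Z_span ZY_span lin_span_zero lin_span_fscale by auto
    qed
  qed
  thus ?thesis by (simp add: chain_list_def)
qed

lemma orbit_in_ker_X_eigen_Nxy:
  assumes C: "linear_op C" "\<And>f. X (C f) = fscale a (C (X f))" "\<And>f. Nxy (C f) = fscale b (C (Nxy f))"
    and v: "X v = 0" "Nxy v = fscale \<alpha> v"
  shows "X ((C ^^ j) v) = 0" "Nxy ((C ^^ j) v) = fscale (b ^ j * \<alpha>) ((C ^^ j) v)"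
  using funpow_twisted_commute[where A = X and B = C and k = j and f = v, OF C(1) C(2)]
    funpow_twisted_commute[where A = Nxy and B = C and k = j and f = v, OF C(1) C(3)] v
  by (simp_all add: linear_op_zero[OF linear_op_funpow[OF C(1)]]
      linear_op_fscale[OF linear_op_funpow[OF C(1)]] mult.commute)

lemma Z_on_eigen:
  assumes \<kappa>: "\<forall>f\<in>cvecs m. Kc f = fscale \<kappa> f" and w: "w \<in> cvecs m" "X w = 0" "Nxy w = fscale g w"
  shows "fscale g (Z w) = fscale \<kappa> w + Y (Nzx w)"
proof -
  have "fscale g (Z w) = Nxy (Z w)" using Z_Nxy[of w] w(3) by simp
  also have "\<dots> = X (Y (Z w)) + fscale la (Y (X (Z w)))" by (simp add: Nxy_def)
  also have "X (Y (Z w)) = fscale \<kappa> w"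
  proof -
    have h: "X (Y (Z w)) + fscale la (X (Z (Y w))) = 0" using X_Nyz[of w] w(2) by (simp add: Nyz_def)
    have "Kc w = fscale \<kappa> w" using \<kappa> w(1) by simp
    hence "- fscale la (X (Z (Y w))) = fscale \<kappa> w" using w(2) by (simp add: Kc_def)
    thus ?thesis using h by (metis add_eq_0_iff2)
  qed
  also have "fscale la (Y (X (Z w))) = Y (Nzx w)" using w(2) by (simp add: Nzx_def)
  finally show ?thesis .
qed

lemma Nyz_Nzx_on_eigen:
  assumes \<kappa>: "\<forall>f\<in>cvecs m. Kc f = fscale \<kappa> f" and w: "w \<in> cvecs m" "X w = 0" "Nxy w = fscale g w"
  shows "fscale g (Nyz (Nzx w)) = fscale (- la * \<kappa> ^ 2) w"
proof -
  have Zw: "fscale g (Z w) = fscale \<kappa> w + Y (Nzx w)" by (rule Z_on_eigen[OF \<kappa> w])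
  have Nzx_w: "Nzx w = fscale la (X (Z w))" using w(2) by (simp add: Nzx_def)
  have NN: "Nyz (Nzx w) = fscale (la * la) (X (Z (Y (Z w))))"
    unfolding Nzx_w linear_op_fscale[OF linear_Nyz] X_Nyz[symmetric] by (simp add: Nyz_def)
  have "Kc (Z w) = fscale \<kappa> (Z w)" using \<kappa> Z_in_cvecs by simp
  hence K: "Y (Z (X (Z w))) i - la * X (Z (Y (Z w))) i = \<kappa> * Z w i" for i
    by (simp add: Kc_def fun_eq_iff)
  have YZXZ: "Y (Z (X (Z w))) = Nzx (Y (Z w))" using Y_Nzx[of "Z w"] by (simp add: Nzx_def)
  have "fscale g (Y (Z w)) = fscale \<kappa> (Y w)" using arg_cong[OF Zw, of Y] by simp
  from arg_cong[OF this, of Nzx]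
  have "fscale g (Nzx (Y (Z w))) = fscale \<kappa> (Y (Nzx w))"
    by (simp add: linear_op_fscale[OF linear_Nzx] Y_Nzx)
  show ?thesis
  proof (rule ext)
    fix i
    have a: "g * Z w i = \<kappa> * w i + Y (Nzx w) i" using fun_cong[OF Zw, of i] by simp
    have b: "g * Nzx (Y (Z w)) i = \<kappa> * Y (Nzx w) i"
      using fun_cong[OF \<open>fscale g (Nzx (Y (Z w))) = _\<close>, of i] by simp
    have e: "la * X (Z (Y (Z w))) i = Nzx (Y (Z w)) i - \<kappa> * Z w i"
      using K[of i] YZXZ by (simp add: algebra_simps)
    have "g * Nyz (Nzx w) i = la * (g * (la * X (Z (Y (Z w))) i))" using NN by (simp add: mult_ac)
    also have "\<dots> = la * (g * Nzx (Y (Z w)) i - \<kappa> * (g * Z w i))" unfolding e by (simp add: algebra_simps)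
    also have "\<dots> = la * (\<kappa> * Y (Nzx w) i - \<kappa> * (\<kappa> * w i + Y (Nzx w) i))" unfolding a b ..
    also have "\<dots> = - la * \<kappa> ^ 2 * w i" by (simp add: algebra_simps power2_eq_square)
    finally show "fscale g (Nyz (Nzx w)) i = fscale (- la * \<kappa> ^ 2) w i" by simp
  qed
qed

lemma dim_le_if_Nzx_injective:
  assumes \<kappa>: "\<forall>f\<in>cvecs m. Kc f = fscale \<kappa> f"
    and v: "v \<in> cvecs m" "v \<noteq> 0" "X v = 0" "Nxy v = fscale \<alpha> v" "\<alpha> \<noteq> 0"
    and inj: "\<forall>f\<in>cvecs m. Nzx f = 0 \<longrightarrow> f = 0"
  shows "m \<le> 2 * n"
proof -
  obtain l where l: "\<forall>f\<in>cvecs m. (Nzx ^^ n) f = fscale l f" using Nzx_power_scalar by blast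
  define w where "w j = (Nzx ^^ j) v" for j
  define g where "g j = inverse la ^ j * \<alpha>" for j
  have wF: "w j \<in> cvecs m" for j unfolding w_def by (rule funpow_closed[OF v(1) Nzx_in_cvecs])
  have wX: "X (w j) = 0" and wN: "Nxy (w j) = fscale (g j) (w j)" for j
    using orbit_in_ker_X_eigen_Nxy[where C = Nzx, OF linear_Nzx X_Nzx Nxy_Nzx v(3,4)] by (simp_all add: w_def g_def)
  have g_nonzero: "g j \<noteq> 0" for j using la_nonzero v(5) by (simp add: g_def)
  have period: "w (j + n) = fscale l (w j)" for j
    using l v(1) by (simp add: w_def funpow_add linear_op_fscale[OF linear_op_funpow[OF linear_Nzx]])
  have "l \<noteq> 0"
    using l v funpow_injective[OF inj Nzx_in_cvecs v(1), of n] by auto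
  let ?S = "lin_span (chain_list w Y n)"
  have mem: "w j \<in> ?S" "Y (w j) \<in> ?S" for j
    using periodic_chain_in_lin_span[where w = w, OF period linear_Y n_pos] by blast+
  have Zw: "Z (w j) \<in> ?S" for j
  proof -
    have "fscale (g j) (Z (w j)) = fscale \<kappa> (w j) + Y (w (Suc j))"
      using Z_on_eigen[OF \<kappa> wF wX wN] by (simp add: w_def)
    hence "Z (w j) = fscale (inverse (g j)) (fscale \<kappa> (w j) + Y (w (Suc j)))"
      using g_nonzero by (rule fscale_eq_iff_inverse)
    thus ?thesis using mem by (simp add: lin_span_add lin_span_fscale)
  qed
  have Nyz_w: "Nyz (w j) \<in> ?S" for j
  proof -
    have "Nyz (w (Suc i)) \<in> ?S" for i
    proof -
      have "fscale (g i) (Nyz (w (Suc i))) = fscale (- la * \<kappa> ^ 2) (w i)"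
        using Nyz_Nzx_on_eigen[OF \<kappa> wF wX wN] by (simp add: w_def)
      hence "Nyz (w (Suc i)) = fscale (inverse (g i)) (fscale (- la * \<kappa> ^ 2) (w i))"
        using g_nonzero by (rule fscale_eq_iff_inverse)
      thus ?thesis using mem by (simp add: lin_span_fscale)
    qed
    moreover have "w 0 = fscale (inverse l) (w (Suc (n - 1)))"
      using period[of 0] n_pos \<open>l \<noteq> 0\<close> by (simp add: fscale_eq_iff_inverse)
    hence "Nyz (w 0) = fscale (inverse l) (Nyz (w (Suc (n - 1))))"
      by (simp add: linear_op_fscale[OF linear_Nyz])
    ultimately show ?thesis by (cases j) (auto intro: lin_span_fscale)
  qed
  show ?thesis
    by (rule dim_le_of_chain[where w = w, OF wF _ period wX wN Zw Nyz_w]) (use v in \<open>simp add: w_def\<close>)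
qed

lemma dim_le_if_Nzx_zero:
  assumes \<kappa>: "\<forall>f\<in>cvecs m. Kc f = fscale \<kappa> f"
    and v: "v \<in> cvecs m" "v \<noteq> 0" "X v = 0" "Nxy v = fscale \<alpha> v" "\<alpha> \<noteq> 0"
    and Nzx_zero: "\<forall>f\<in>cvecs m. Nzx f = 0"
  shows "m \<le> 2 * n"
proof -
  obtain \<nu> where \<nu>: "\<forall>f\<in>cvecs m. (Nyz ^^ n) f = fscale \<nu> f" using Nyz_power_scalar by blast
  define w where "w j = (Nyz ^^ j) v" for j
  define g where "g j = la ^ j * \<alpha>" for j
  have wF: "w j \<in> cvecs m" for j unfolding w_def by (rule funpow_closed[OF v(1) Nyz_in_cvecs])
  have wX: "X (w j) = 0" and wN: "Nxy (w j) = fscale (g j) (w j)" for j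
    using orbit_in_ker_X_eigen_Nxy[where C = Nyz and a = 1, OF linear_Nyz _ Nxy_Nyz v(3,4)]
    by (simp_all add: w_def g_def X_Nyz)
  have g_nonzero: "g j \<noteq> 0" for j using la_nonzero v(5) by (simp add: g_def)
  have period: "w (j + n) = fscale \<nu> (w j)" for j
    using \<nu> v(1) by (simp add: w_def funpow_add linear_op_fscale[OF linear_op_funpow[OF linear_Nyz]])
  have "\<kappa> = 0"
  proof -
    have "fscale \<alpha> (Z v) = fscale \<kappa> v" using Z_on_eigen[OF \<kappa> v(1,3,4)] Nzx_zero v(1) by simp
    hence Zv: "Z v = fscale (inverse \<alpha> * \<kappa>) v" using v(5) by (auto dest: fscale_eq_iff_inverse)
    have "0 = Z (Z v)" by simp
    also have "\<dots> = fscale ((inverse \<alpha> * \<kappa>) * (inverse \<alpha> * \<kappa>)) v" by (simp add: Zv)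
    finally show ?thesis using v(2,5) by (simp add: fscale_eq_zero_iff)
  qed
  have Zw: "Z (w j) = 0" for j
    using Z_on_eigen[OF \<kappa> wF wX wN] Nzx_zero wF g_nonzero \<open>\<kappa> = 0\<close> by (simp add: fscale_eq_zero_iff)
  show ?thesis
  proof (rule dim_le_of_chain[where w = w, OF wF _ period wX wN])
    show "w 0 \<noteq> 0" using v(2) by (simp add: w_def)
    show "Z (w j) \<in> lin_span (chain_list w Y n)" for j using Zw lin_span_zero by simp
    have "Nyz (w j) = w (Suc j)" for j by (simp add: w_def)
    thus "Nyz (w j) \<in> lin_span (chain_list w Y n)" for j
      using periodic_chain_in_lin_span[where w = w, OF period linear_Y n_pos] by simp
  qed
qed

lemma dim_le_if_Nxy_nonzero:
  assumes "\<exists>f\<in>cvecs m. Nxy f \<noteq> 0"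
  shows "m \<le> 2 * n"
proof -
  have inj: "\<forall>f\<in>cvecs m. Nxy f = 0 \<longrightarrow> f = 0" using Nxy_zero_or_injective assms by blast
  obtain \<mu> where \<mu>: "\<forall>f\<in>cvecs m. (Nxy ^^ n) f = fscale \<mu> f" using Nxy_power_scalar by blast
  obtain u0 where "u0 \<in> cvecs m" "u0 \<noteq> 0" using cvecs_nonzero_elem[OF m_pos] by blast
  then obtain u where u: "u \<in> cvecs m" "u \<noteq> 0" "X u = 0"
    by (rule square_zero_kernel_nonzero[where C = X, OF X_in_cvecs X_square])
  have orbit_nonzero: "(Nxy ^^ k) u \<noteq> 0" for k
    using funpow_injective[OF inj Nxy_in_cvecs u(1)] u(2) by blast
  have "(Nxy ^^ n) u = fscale \<mu> u" using \<mu> u(1) by simp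
  moreover have "\<mu> \<noteq> 0" using \<mu> u orbit_nonzero[of n] by auto
  ultimately obtain v \<alpha> c where v: "v = (\<Sum>k<n. fscale (c k) ((Nxy ^^ k) u))" "v \<noteq> 0"
      "Nxy v = fscale \<alpha> v" "\<alpha> \<noteq> 0"
    using orbit_eigenvector[where C = Nxy and u = u and \<mu> = \<mu>,
        OF linear_Nxy la_root la_primitive n_pos] orbit_nonzero by blast
  have "X ((Nxy ^^ k) u) = 0" for k
    using funpow_twisted_commute[where A = X and B = Nxy and k = k and f = u, OF linear_Nxy X_Nxy] u(3)
    by (simp add: linear_op_zero[OF linear_op_funpow[OF linear_Nxy]])
  hence vX: "X v = 0" by (simp add: v(1) linear_op_sum[OF linear_X])
  have vF: "v \<in> cvecs m"
    unfolding v(1) by (intro cvecs_sum cvecs_fscale funpow_closed[OF u(1) Nxy_in_cvecs])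
  obtain \<kappa> where \<kappa>: "\<forall>f\<in>cvecs m. Kc f = fscale \<kappa> f" using Kc_scalar by blast
  show ?thesis
    using Nzx_zero_or_injective dim_le_if_Nzx_zero[OF \<kappa> vF v(2) vX v(3,4)]
      dim_le_if_Nzx_injective[OF \<kappa> vF v(2) vX v(3,4)] by blast
qed

lemma common_kernel_vector:
  assumes "\<forall>f\<in>cvecs m. Nxy f = 0" "\<forall>f\<in>cvecs m. Nyz f = 0" "\<forall>f\<in>cvecs m. Nzx f = 0"
  obtains u where "u \<in> cvecs m" "u \<noteq> 0" "X u = 0" "Y u = 0" "Z u = 0"
proof -
  obtain u0 where "u0 \<in> cvecs m" "u0 \<noteq> 0" using cvecs_nonzero_elem[OF m_pos] by blast
  then obtain u1 where u1: "u1 \<in> cvecs m" "u1 \<noteq> 0" "Z u1 = 0"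
    by (rule square_zero_kernel_nonzero[where C = Z, OF Z_in_cvecs Z_square])
  obtain u2 where u2: "u2 \<in> cvecs m" "u2 \<noteq> 0" "Z u2 = 0" "Y u2 = 0"
  proof (cases "Y u1 = 0")
    case False
    have "Nyz u1 = 0" using assms(2) u1(1) by blast
    hence "fscale la (Z (Y u1)) = 0" using u1(3) by (simp add: Nyz_def)
    hence "Z (Y u1) = 0" using la_nonzero by (simp add: fscale_eq_zero_iff)
    thus ?thesis using that[of "Y u1"] Y_in_cvecs False by simp
  qed (use that u1 in blast)
  show ?thesis
  proof (cases "X u2 = 0")
    case False
    have "Nxy u2 = 0" "Nzx u2 = 0" using assms(1,3) u2(1) by blast+
    hence "fscale la (Y (X u2)) = 0" using u2(4) by (simp add: Nxy_def)
    hence "Y (X u2) = 0" using la_nonzero by (simp add: fscale_eq_zero_iff)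
    moreover have "Z (X u2) = 0" using \<open>Nzx u2 = 0\<close> u2(3) by (simp add: Nzx_def)
    ultimately show ?thesis using that[of "X u2"] X_in_cvecs False by simp
  qed (use that u2 in blast)
qed

theorem dim_le: "m \<le> 2 * n"
proof -
  interpret r: simple_T_module m n la Y Z X by (rule rotate)
  interpret rr: simple_T_module m n la Z X Y by (rule r.rotate)
  have rr_Nxy: "rr.Nxy = Nzx" using r.rotate_Nxy rotate_Nyz by simp
  consider "\<exists>f\<in>cvecs m. Nxy f \<noteq> 0" | "\<exists>f\<in>cvecs m. Nyz f \<noteq> 0" | "\<exists>f\<in>cvecs m. Nzx f \<noteq> 0"
    | "\<forall>f\<in>cvecs m. Nxy f = 0" "\<forall>f\<in>cvecs m. Nyz f = 0" "\<forall>f\<in>cvecs m. Nzx f = 0"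
    by blast
  thus ?thesis
  proof cases
    case 1 thus ?thesis by (rule dim_le_if_Nxy_nonzero)
  next
    case 2 thus ?thesis using r.dim_le_if_Nxy_nonzero by (simp add: rotate_Nxy)
  next
    case 3 thus ?thesis using rr.dim_le_if_Nxy_nonzero by (simp add: rr_Nxy)
  next
    case 4
    then obtain u where u: "u \<in> cvecs m" "u \<noteq> 0" "X u = 0" "Y u = 0" "Z u = 0"
      by (rule common_kernel_vector)
    have "m \<le> length [u]" by (rule dim_le_of_invariant_list) (use u lin_span_zero in auto)
    thus ?thesis using n_pos by simp
  qed
qed

end

section \<open>Representations of \<open>T\<^sub>t\<close> as modules\<close>

lemma word_eval_Cons: "word_eval m A (i # w) = A i * word_eval m A w"
  by (simp add: word_eval_def)

lemma word_eval_carrier: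
  "\<forall>i\<in>set w. A i \<in> carrier_mat m m \<Longrightarrow> word_eval m A w \<in> carrier_mat m m"
  by (induct w) (auto simp: word_eval_def)

lemma nc_eval_Cons: "nc_eval m A ((c, w) # p) = c \<cdot>\<^sub>m word_eval m A w + nc_eval m A p"
  by (simp add: nc_eval_def)

lemma nc_eval_carrier:
  "\<forall>x\<in>set p. \<forall>i\<in>set (snd x). A i \<in> carrier_mat m m \<Longrightarrow> nc_eval m A p \<in> carrier_mat m m"
  by (induct p) (auto simp: nc_eval_def word_eval_carrier)

lemma mat_op_word_eval:
  assumes "\<forall>i\<in>set w. A i \<in> carrier_mat m m" "w \<noteq> []"
  shows "mat_op m (word_eval m A w) f = foldr (\<lambda>i. mat_op m (A i)) w f"
  using assms
proof (induct w)
  case (Cons i w)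
  show ?case
  proof (cases "w = []")
    case True
    thus ?thesis using Cons(2) by (simp add: word_eval_def)
  next
    case False
    thus ?thesis using Cons word_eval_carrier[of w A m] by (simp add: word_eval_Cons mat_op_mult)
  qed
qed simp

lemma mat_op_nc_eval:
  assumes "\<forall>x\<in>set p. \<forall>i\<in>set (snd x). A i \<in> carrier_mat m m"
  shows "mat_op m (nc_eval m A p) f =
    foldr (\<lambda>(c, w) g. fscale c (mat_op m (word_eval m A w) f) + g) p 0"
  using assms
proof (induct p)
  case Nil thus ?case by (simp add: nc_eval_def mat_op_zero_mat)
next
  case (Cons x p)
  obtain c w where x: "x = (c, w)" by fastforce
  thus ?case using Cons word_eval_carrier[of w A m] nc_eval_carrier[of p A m]
    by (simp add: nc_eval_Cons mat_op_add mat_op_smult)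
qed

text \<open>The relations of \<open>T\<^sub>t\<close> evaluated at the monomials
  \<open>a\<^sub>1, \<dots>, a\<^sub>6 = zxy, xyz, yzx, yxz, zyx, xzy\<close>. Since \<open>\<omega>\<^sup>3 = 1\<close>, the combinations
  \<open>rel1 - \<omega> rel2\<close> and \<open>rel1 - rel2\<close> are \<open>1 - \<omega>\<close> and \<open>\<omega> - \<omega>\<^sup>2\<close> times the first two
  conclusions; the third is their sum.\<close>

lemma cube_root_relations_decouple:
  fixes w t a1 a2 a3 a4 a5 a6 :: complex
  assumes w: "w ^ 3 = 1" "w \<noteq> 1"
    and rel1: "a1 + w*a2 + w^2*a3 + t*a4 + t*w*a5 + t*w^2*a6 = 0"
    and rel2: "a1 + w^2*a2 + w*a3 + t*a4 + t*w^2*a5 + t*w*a6 = 0"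
  shows "a1 - a2 + t*a4 - t*a5 = 0" "a2 - a3 + t*a5 - t*a6 = 0" "a1 - a3 + t*a4 - t*a6 = 0"
proof -
  have "(1 - w) * (a1 - a2 + t*a4 - t*a5) = (a1 + w*a2 + w^2*a3 + t*a4 + t*w*a5 + t*w^2*a6)
     - w * (a1 + w^2*a2 + w*a3 + t*a4 + t*w^2*a5 + t*w*a6) + (w^3 - 1) * (a2 + t*a5)"
    by (simp add: algebra_simps power2_eq_square power3_eq_cube)
  thus first: "a1 - a2 + t*a4 - t*a5 = 0" using assms by simp
  have "(w * (1 - w)) * (a2 - a3 + t*a5 - t*a6) = (a1 + w*a2 + w^2*a3 + t*a4 + t*w*a5 + t*w^2*a6)
     - (a1 + w^2*a2 + w*a3 + t*a4 + t*w^2*a5 + t*w*a6)"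
    by (simp add: algebra_simps power2_eq_square)
  moreover have "w \<noteq> 0" using w(1) by auto
  ultimately show second: "a2 - a3 + t*a5 - t*a6 = 0" using assms by simp
  have "a1 - a3 + t*a4 - t*a6 = (a1 - a2 + t*a4 - t*a5) + (a2 - a3 + t*a5 - t*a6)"
    by (simp add: algebra_simps)
  thus "a1 - a3 + t*a4 - t*a6 = 0" using first second by simp
qed

lemma T_rep_relations:
  assumes "T_rep \<omega> t m A"
  defines "X \<equiv> mat_op m (A 0)" and "Y \<equiv> mat_op m (A 1)" and "Z \<equiv> mat_op m (A 2)"
  shows "X (X f) = 0" "Y (Y f) = 0" "Z (Z f) = 0"
    "Z (X (Y f)) i + \<omega> * X (Y (Z f)) i + \<omega>^2 * Y (Z (X f)) i + t * Y (X (Z f)) i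
       + t * \<omega> * Z (Y (X f)) i + t * \<omega>^2 * X (Z (Y f)) i = 0"
    "Z (X (Y f)) i + \<omega>^2 * X (Y (Z f)) i + \<omega> * Y (Z (X f)) i + t * Y (X (Z f)) i
       + t * \<omega>^2 * Z (Y (X f)) i + t * \<omega> * X (Z (Y f)) i = 0"
proof -
  have c: "A 0 \<in> carrier_mat m m" "A (Suc 0) \<in> carrier_mat m m" "A (Suc (Suc 0)) \<in> carrier_mat m m"
    using assms(1) unfolding T_rep_def by (auto simp: numeral_3_eq_3)
  have c2: "A 2 \<in> carrier_mat m m" using c by (simp add: numeral_2_eq_2)
  have rel: "mat_op m (nc_eval m A r) f = 0" if "r \<in> set (T_rels \<omega> t)" for r
    using assms(1) that unfolding T_rep_def by (simp add: mat_op_zero_mat)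
  note eval = mat_op_nc_eval mat_op_word_eval c c2 X_def Y_def Z_def
  show "X (X f) = 0" using rel[of "[(1, [0,0])]"] by (simp add: T_rels_def S_rels_def eval)
  show "Y (Y f) = 0" using rel[of "[(1, [1,1])]"] by (simp add: T_rels_def S_rels_def eval)
  show "Z (Z f) = 0" using rel[of "[(1, [2,2])]"] by (simp add: T_rels_def S_rels_def eval)
  show "Z (X (Y f)) i + \<omega> * X (Y (Z f)) i + \<omega>^2 * Y (Z (X f)) i + t * Y (X (Z f)) i
       + t * \<omega> * Z (Y (X f)) i + t * \<omega>^2 * X (Z (Y f)) i = 0"
    using fun_cong[OF rel[of "T_rel1 \<omega> t"], of i] by (simp add: T_rels_def T_rel1_def eval add.assoc)
  show "Z (X (Y f)) i + \<omega>^2 * X (Y (Z f)) i + \<omega> * Y (Z (X f)) i + t * Y (X (Z f)) i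
       + t * \<omega>^2 * Z (Y (X f)) i + t * \<omega> * X (Z (Y f)) i = 0"
    using fun_cong[OF rel[of "T_rel2 \<omega> t"], of i] by (simp add: T_rels_def T_rel2_def eval add.assoc)
qed

lemma T_rep_simple_T_module:
  fixes \<omega> \<zeta> :: complex
  assumes \<omega>: "\<omega> ^ 3 = 1" "\<omega> \<noteq> 1" and n: "0 < n"
    and \<zeta>: "\<zeta> ^ n = 1" "\<And>k. 0 < k \<Longrightarrow> k < n \<Longrightarrow> \<zeta> ^ k \<noteq> 1"
    and rep: "T_rep \<omega> (- \<zeta>) m A" and simple: "simple_rep m A"
  shows "simple_T_module m n \<zeta> (mat_op m (A 0)) (mat_op m (A 1)) (mat_op m (A 2))"
proof -
  let ?X = "mat_op m (A 0)" and ?Y = "mat_op m (A 1)" and ?Z = "mat_op m (A 2)"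
  note rel = T_rep_relations[OF rep]
  have decoupled:
    "?Z (?X (?Y f)) i - ?X (?Y (?Z f)) i + (- \<zeta>) * ?Y (?X (?Z f)) i - (- \<zeta>) * ?Z (?Y (?X f)) i = 0"
    "?X (?Y (?Z f)) i - ?Y (?Z (?X f)) i + (- \<zeta>) * ?Z (?Y (?X f)) i - (- \<zeta>) * ?X (?Z (?Y f)) i = 0"
    "?Z (?X (?Y f)) i - ?Y (?Z (?X f)) i + (- \<zeta>) * ?Y (?X (?Z f)) i - (- \<zeta>) * ?X (?Z (?Y f)) i = 0"
    for f i
    using cube_root_relations_decouple[OF \<omega> rel(4)[where f = f and i = i] rel(5)[where f = f and i = i]] .
  have carrier: "\<forall>i<3. A i \<in> carrier_mat m m" using rep unfolding T_rep_def by auto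
  note lin = linear_op_mat_op[THEN linear_op_add] linear_op_mat_op[THEN linear_op_fscale]
  show ?thesis
  proof
    show "linear_op ?X" "linear_op ?Y" "linear_op ?Z" by (rule linear_op_mat_op)+
    show "?X f \<in> cvecs m" "?Y f \<in> cvecs m" "?Z f \<in> cvecs m" for f by (rule mat_op_in_cvecs)+
    show "?X (?X f) = 0" "?Y (?Y f) = 0" "?Z (?Z f) = 0" for f by (rule rel)+
    show "?Z (?X (?Y f) + fscale \<zeta> (?Y (?X f))) = ?X (?Y (?Z f)) + fscale \<zeta> (?Y (?X (?Z f)))" for f
      using decoupled(1)[where f = f] by (simp add: fun_eq_iff lin algebra_simps)
    show "?X (?Y (?Z f) + fscale \<zeta> (?Z (?Y f))) = ?Y (?Z (?X f)) + fscale \<zeta> (?Z (?Y (?X f)))" for f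
      using decoupled(2)[where f = f] by (simp add: fun_eq_iff lin algebra_simps)
    show "?Y (?Z (?X f) + fscale \<zeta> (?X (?Z f))) = ?Z (?X (?Y f)) + fscale \<zeta> (?X (?Z (?Y f)))" for f
      using decoupled(3)[where f = f] by (simp add: fun_eq_iff lin algebra_simps)
    show "0 < m" using simple by (simp add: simple_rep_def)
    show "W = {0} \<or> W = cvecs m"
      if "fsubspace m W" "\<forall>f\<in>W. ?X f \<in> W \<and> ?Y f \<in> W \<and> ?Z f \<in> W" for W
      using simple_rep_fsubspace_trivial[OF simple carrier that(1)] that(2)
      by (auto simp: all_less_three)
  qed (use \<zeta> n in simp_all)
qed

section \<open>A simple representation of dimension \<open>2n\<close>\<close>

text \<open>The \<open>2n\<close>-dimensional representation of \<open>T\<^sub>-\<^sub>\<zeta>\<close>: on the basis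
  \<open>e\<^sub>0, \<dots>, e\<^sub>2\<^sub>n\<^sub>-\<^sub>1\<close>, \<open>X e\<^sub>n\<^sub>+\<^sub>i = \<zeta>\<^sup>i e\<^sub>i\<close>, \<open>Y e\<^sub>i = e\<^sub>n\<^sub>+\<^sub>i\<close> and
  \<open>Z e\<^sub>n\<^sub>+\<^sub>i = e\<^sub>(\<^sub>i\<^sub>+\<^sub>1\<^sub>) \<^sub>m\<^sub>o\<^sub>d \<^sub>n\<close> for \<open>i < n\<close>, all other basis vectors being killed.\<close>

definition std_X :: "nat \<Rightarrow> complex \<Rightarrow> (nat \<Rightarrow> complex) \<Rightarrow> nat \<Rightarrow> complex" where
  "std_X n z f = (\<lambda>i. if i < n then z ^ i * f (n + i) else 0)"

definition std_Y :: "nat \<Rightarrow> (nat \<Rightarrow> complex) \<Rightarrow> nat \<Rightarrow> complex" where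
  "std_Y n f = (\<lambda>i. if n \<le> i \<and> i < 2 * n then f (i - n) else 0)"

definition std_Z :: "nat \<Rightarrow> (nat \<Rightarrow> complex) \<Rightarrow> nat \<Rightarrow> complex" where
  "std_Z n f = (\<lambda>i. if i < n then f (n + (i + n - 1) mod n) else 0)"

definition delta_mat ::
    "nat \<Rightarrow> (nat \<Rightarrow> bool) \<Rightarrow> (nat \<Rightarrow> nat) \<Rightarrow> (nat \<Rightarrow> complex) \<Rightarrow> complex mat" where
  "delta_mat m P \<sigma> c = mat m m (\<lambda>(i,j). if P i \<and> j = \<sigma> i then c i else 0)"

definition std_rep :: "nat \<Rightarrow> complex \<Rightarrow> nat \<Rightarrow> complex mat" where
  "std_rep n z i =
     (if i = 0 then delta_mat (2*n) (\<lambda>i. i < n) (\<lambda>i. n + i) (\<lambda>i. z ^ i)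
      else if i = 1 then delta_mat (2*n) (\<lambda>i. n \<le> i) (\<lambda>i. i - n) (\<lambda>_. 1)
      else if i = 2 then delta_mat (2*n) (\<lambda>i. i < n) (\<lambda>i. n + (i + n - 1) mod n) (\<lambda>_. 1)
      else 0\<^sub>m (2*n) (2*n))"

lemma std_rep_carrier: "std_rep n z i \<in> carrier_mat (2*n) (2*n)"
  by (simp add: std_rep_def delta_mat_def)

lemma mat_op_delta_mat:
  assumes "\<And>i. i < m \<Longrightarrow> P i \<Longrightarrow> \<sigma> i < m"
  shows "mat_op m (delta_mat m P \<sigma> c) f = (\<lambda>i. if i < m \<and> P i then c i * f (\<sigma> i) else 0)"
proof (rule ext)
  fix i
  have "(\<Sum>j<m. (if P i \<and> j = \<sigma> i then c i else 0) * f j) = c i * f (\<sigma> i)" if "i < m" "P i"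
  proof -
    have "(\<Sum>j<m. (if P i \<and> j = \<sigma> i then c i else 0) * f j)
        = (\<Sum>j<m. if j = \<sigma> i then c i * f (\<sigma> i) else 0)"
      using that(2) by (intro sum.cong) auto
    thus ?thesis using assms[OF that] by simp
  qed
  thus "mat_op m (delta_mat m P \<sigma> c) f i = (if i < m \<and> P i then c i * f (\<sigma> i) else 0)"
    by (auto simp: mat_op_def delta_mat_def)
qed

lemma mat_op_std_rep:
  assumes "0 < n"
  shows "mat_op (2*n) (std_rep n z 0) = std_X n z" "mat_op (2*n) (std_rep n z 1) = std_Y n"
    "mat_op (2*n) (std_rep n z 2) = std_Z n"
  using assms
  by (auto simp: std_rep_def mat_op_delta_mat std_X_def std_Y_def std_Z_def fun_eq_iff)

lemma std_ops_relations:
  assumes n: "0 < n" and \<zeta>: "\<zeta> ^ n = 1"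
  shows "std_X n \<zeta> (std_X n \<zeta> f) = 0" "std_Y n (std_Y n f) = 0" "std_Z n (std_Z n f) = 0"
    "std_Z n (std_X n \<zeta> f) = 0" "std_X n \<zeta> (std_Z n f) = 0"
    "std_X n \<zeta> (std_Y n (std_Z n f)) = fscale \<zeta> (std_Z n (std_Y n (std_X n \<zeta> f)))"
proof -
  have mod_less: "(i + n - 1) mod n < n" for i using n by simp
  show "std_X n \<zeta> (std_X n \<zeta> f) = 0" "std_Z n (std_Z n f) = 0"
    "std_Z n (std_X n \<zeta> f) = 0" "std_X n \<zeta> (std_Z n f) = 0"
    by (simp_all add: std_X_def std_Z_def fun_eq_iff)
  show "std_Y n (std_Y n f) = 0" by (rule ext) (auto simp: std_Y_def)
  have shift: "\<zeta> * \<zeta> ^ ((i + n - 1) mod n) = \<zeta> ^ i" if "i < n" for i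
  proof -
    have "\<zeta> ^ (i + n - 1) = (\<zeta> ^ n) ^ ((i + n - 1) div n) * \<zeta> ^ ((i + n - 1) mod n)"
      by (simp flip: power_mult power_add)
    hence "\<zeta> * \<zeta> ^ ((i + n - 1) mod n) = \<zeta> ^ Suc (i + n - 1)" using \<zeta> by simp
    also have "\<dots> = \<zeta> ^ i" using \<zeta> n by (simp add: power_add)
    finally show ?thesis .
  qed
  show "std_X n \<zeta> (std_Y n (std_Z n f)) = fscale \<zeta> (std_Z n (std_Y n (std_X n \<zeta> f)))"
  proof (rule ext)
    fix i
    show "std_X n \<zeta> (std_Y n (std_Z n f)) i = fscale \<zeta> (std_Z n (std_Y n (std_X n \<zeta> f))) i"
      using shift[of i] mod_less[of i] by (simp add: std_X_def std_Y_def std_Z_def)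
  qed
qed

lemma std_rep_T_rep:
  fixes \<omega> \<zeta> :: complex
  assumes n: "0 < n" and \<zeta>: "\<zeta> ^ n = 1"
  shows "T_rep \<omega> (- \<zeta>) (2*n) (std_rep n \<zeta>)"
  unfolding T_rep_def
proof (intro conjI allI impI ballI)
  show "std_rep n \<zeta> i \<in> carrier_mat (2*n) (2*n)" for i by (rule std_rep_carrier)
  fix r assume r: "r \<in> set (T_rels \<omega> (- \<zeta>))"
  have carrier: "\<forall>x\<in>set p. \<forall>i\<in>set (snd x). std_rep n \<zeta> i \<in> carrier_mat (2*n) (2*n)"
    for p :: ncpoly
    using std_rep_carrier by blast
  have words: "mat_op (2*n) (word_eval (2*n) (std_rep n \<zeta>) w) f
      = foldr (\<lambda>i. mat_op (2*n) (std_rep n \<zeta> i)) w f" if "w \<noteq> []" for w f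
    using mat_op_word_eval that std_rep_carrier by blast
  have ops: "mat_op (2*n) (std_rep n \<zeta> 0) = std_X n \<zeta>"
    "mat_op (2*n) (std_rep n \<zeta> (Suc 0)) = std_Y n" "mat_op (2*n) (std_rep n \<zeta> 2) = std_Z n"
    using mat_op_std_rep[OF n] by simp_all
  have X0: "std_X n \<zeta> 0 = 0" "std_Y n 0 = 0" "std_Z n 0 = 0"
    by (simp_all add: std_X_def std_Y_def std_Z_def fun_eq_iff)
  have collect: "fscale a (fscale b g) + fscale c g = fscale (a * b + c) g"
    "fscale (a * b) g + fscale (- (b * a)) g = 0" for a b c g
    by (simp_all add: fun_eq_iff algebra_simps)
  have "r = [(1, [0,0])] \<or> r = [(1, [1,1])] \<or> r = [(1, [2,2])] \<or> r = T_rel1 \<omega> (- \<zeta>) \<or>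
      r = T_rel2 \<omega> (- \<zeta>)"
    using r by (auto simp: T_rels_def S_rels_def)
  hence "mat_op (2*n) (nc_eval (2*n) (std_rep n \<zeta>) r) f = 0" for f
    by (elim disjE) (simp_all add: T_rel1_def T_rel2_def mat_op_nc_eval[OF carrier] words ops
        std_ops_relations[OF n \<zeta>] X0 collect)
  thus "nc_eval (2*n) (std_rep n \<zeta>) r = 0\<^sub>m (2*n) (2*n)"
    using mat_op_eq_zero_imp nc_eval_carrier[OF carrier] by blast
qed

lemma mod_pred_eq_iff:
  fixes a b n :: nat
  assumes "a < n" "b < n"
  shows "(b + n - 1) mod n = a \<longleftrightarrow> b = (a + 1) mod n"
proof (cases "b = 0")
  case True
  thus ?thesis using assms by (cases "a + 1 = n") auto
next
  case False
  hence "(b + n - 1) mod n = b - 1" using assms(2) by (simp add: mod_if)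
  thus ?thesis using False assms by (cases "a + 1 = n") auto
qed

lemma std_YX_twist:
  assumes upper: "\<And>k. \<not> (n \<le> k \<and> k < 2 * n) \<Longrightarrow> g k = 0"
  shows "std_Y n (std_X n \<zeta> (\<lambda>k. \<zeta> ^ (p * (k - n)) * g k)) = (\<lambda>k. \<zeta> ^ (Suc p * (k - n)) * g k)"
proof (rule ext)
  fix k
  show "std_Y n (std_X n \<zeta> (\<lambda>k. \<zeta> ^ (p * (k - n)) * g k)) k = \<zeta> ^ (Suc p * (k - n)) * g k"
  proof (cases "n \<le> k \<and> k < 2*n")
    case True
    hence "n + (k - n) = k" "k - n < n" by auto
    moreover have "\<zeta> ^ (Suc p * (k - n)) = \<zeta> ^ (k - n) * \<zeta> ^ (p * (k - n))"
      by (simp only: mult_Suc power_add)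
    ultimately show ?thesis using True by (simp add: std_X_def std_Y_def del: mult_Suc)
  next
    case False
    thus ?thesis by (auto simp: std_Y_def upper)
  qed
qed

text \<open>Averaging the \<open>(YX)\<^sup>p g = (\<zeta>\<^bsup>p(k-n)\<^esup> g\<^sub>k)\<^sub>k\<close> against \<open>\<zeta>\<^bsup>-jp\<^esup>\<close> isolates the
  coordinate \<open>n + j\<close> of \<open>g\<close>.\<close>

lemma upper_fourier_filter:
  fixes \<zeta> :: complex
  assumes \<zeta>: "\<zeta> ^ n = 1" "\<And>k. 0 < k \<Longrightarrow> k < n \<Longrightarrow> \<zeta> ^ k \<noteq> 1" and j: "j < n"
    and upper: "\<And>k. \<not> (n \<le> k \<and> k < 2 * n) \<Longrightarrow> g k = 0"
  shows "(\<Sum>p<n. fscale (\<zeta> ^ ((n - j) * p)) (\<lambda>k. \<zeta> ^ (p * (k - n)) * g k))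
    = fscale (of_nat n * g (n + j)) (unit_fun (n + j))"
proof (rule ext)
  fix k
  have "(\<Sum>p<n. fscale (\<zeta> ^ ((n - j) * p)) (\<lambda>k. \<zeta> ^ (p * (k - n)) * g k)) k
      = (\<Sum>p<n. g k * \<zeta> ^ ((n - j + (k - n)) * p))"
    by (simp add: sum_fun_apply add_mult_distrib add_mult_distrib2 power_add mult_ac)
  also have "\<dots> = g k * (\<Sum>p<n. \<zeta> ^ ((n - j + (k - n)) * p))"
    by (simp add: sum_distrib_left)
  also have "\<dots> = fscale (of_nat n * g (n + j)) (unit_fun (n + j)) k"
  proof (cases "n \<le> k \<and> k < 2*n")
    case True
    define d where "d = n - j + (k - n)"
    have d: "0 < d" "d < 2 * n" using True j by (auto simp: d_def)
    have "n dvd d \<longleftrightarrow> d = n"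
    proof
      assume "n dvd d"
      then obtain q where q: "d = n * q" by auto
      hence "q \<noteq> 0" "n * q < n * 2" using d by (auto simp: mult.commute)
      hence "q = 1" by simp
      thus "d = n" using q by simp
    qed auto
    moreover have "d = n \<longleftrightarrow> k = n + j" using True j by (auto simp: d_def)
    ultimately have "(\<Sum>p<n. \<zeta> ^ (d * p)) = (if k = n + j then of_nat n else 0)"
      using sum_root_unity_powers[OF \<zeta>, of d] j by simp
    thus ?thesis by (auto simp: unit_fun_def d_def)
  next
    case False
    thus ?thesis using upper[OF False] j by (auto simp: unit_fun_def)
  qed
  finally show "(\<Sum>p<n. fscale (\<zeta> ^ ((n - j) * p)) (\<lambda>k. \<zeta> ^ (p * (k - n)) * g k)) k
      = fscale (of_nat n * g (n + j)) (unit_fun (n + j)) k" .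
qed

lemma std_YZ_unit_fun:
  assumes n: "0 < n" and a: "a < n"
  shows "std_Y n (std_Z n (unit_fun (n + a))) = unit_fun (n + (a + 1) mod n)"
proof (rule ext)
  fix k
  show "std_Y n (std_Z n (unit_fun (n + a))) k = unit_fun (n + (a + 1) mod n) k"
  proof (cases "n \<le> k \<and> k < 2*n")
    case True
    hence "k - n < n" by auto
    hence "(k - n + n - 1) mod n = a \<longleftrightarrow> k - n = (a + 1) mod n" by (rule mod_pred_eq_iff[OF a])
    moreover have "k - n = (a + 1) mod n \<longleftrightarrow> k = n + (a + 1) mod n" using True by auto
    ultimately show ?thesis using True \<open>k - n < n\<close> by (simp add: std_Y_def std_Z_def unit_fun_def)
  next
    case False
    moreover have "(a + 1) mod n < n" using n by simp
    ultimately show ?thesis by (auto simp: std_Y_def unit_fun_def)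
  qed
qed

lemma std_X_unit_fun: "b < n \<Longrightarrow> std_X n \<zeta> (unit_fun (n + b)) = fscale (\<zeta> ^ b) (unit_fun b)"
  by (auto simp: std_X_def unit_fun_def fun_eq_iff)

context
  fixes n :: nat and \<zeta> :: complex and W :: "(nat \<Rightarrow> complex) set"
  assumes n_pos: "0 < n" and \<zeta>_root: "\<zeta> ^ n = 1"
    and \<zeta>_primitive: "\<And>k. 0 < k \<Longrightarrow> k < n \<Longrightarrow> \<zeta> ^ k \<noteq> 1"
    and W: "fsubspace (2*n) W"
    and W_invariant: "\<And>f. f \<in> W \<Longrightarrow> std_X n \<zeta> f \<in> W \<and> std_Y n f \<in> W \<and> std_Z n f \<in> W"
begin

lemma std_submodule_fscale: "f \<in> W \<Longrightarrow> fscale c f \<in> W"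
  using W by (simp add: fsubspace_def)

lemma std_submodule_upper_vector:
  assumes f: "f \<in> W" "f \<noteq> 0"
  obtains g where "g \<in> W" "g \<noteq> 0" "\<And>k. k < n \<Longrightarrow> g k = 0"
proof (cases "\<exists>i<n. f i \<noteq> 0")
  case True
  then obtain i where i: "i < n" "f i \<noteq> 0" by blast
  have "std_Y n f (n + i) = f i" using i by (simp add: std_Y_def)
  hence "std_Y n f \<noteq> 0" using i by auto
  moreover have "std_Y n f k = 0" if "k < n" for k using that by (simp add: std_Y_def)
  ultimately show ?thesis using that W_invariant f(1) by blast
qed (use that f in auto)

lemma std_submodule_unit_vector:
  assumes g: "g \<in> W" "g \<noteq> 0" "\<And>k. k < n \<Longrightarrow> g k = 0"
  obtains j where "j < n" "unit_fun (n + j) \<in> W"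
proof -
  have upper: "g k = 0" if "\<not> (n \<le> k \<and> k < 2*n)" for k
    using that g W by (auto simp: fsubspace_def cvecs_def)
  obtain j where j: "j < n" "g (n + j) \<noteq> 0"
  proof -
    obtain k where k: "g k \<noteq> 0" using g(2) by (auto simp: fun_eq_iff)
    hence "n \<le> k" "k < 2*n" using upper by blast+
    thus ?thesis using that[of "k - n"] k by auto
  qed
  have twisted: "(\<lambda>k. \<zeta> ^ (p * (k - n)) * g k) \<in> W" for p
  proof (induct p)
    case 0
    thus ?case using g(1) by simp
  next
    case (Suc p)
    have "(\<lambda>k. \<zeta> ^ (Suc p * (k - n)) * g k) = std_Y n (std_X n \<zeta> (\<lambda>k. \<zeta> ^ (p * (k - n)) * g k))"
      by (rule std_YX_twist[OF upper, symmetric])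
    also have "\<dots> \<in> W" using Suc W_invariant by blast
    finally show ?case .
  qed
  define c where "c = of_nat n * g (n + j)"
  have "fscale c (unit_fun (n + j))
      = (\<Sum>p<n. fscale (\<zeta> ^ ((n - j) * p)) (\<lambda>k. \<zeta> ^ (p * (k - n)) * g k))"
    unfolding c_def by (rule upper_fourier_filter[OF \<zeta>_root \<zeta>_primitive j(1) upper, symmetric])
  also have "\<dots> \<in> W" using W by (intro fsubspace_sum) (auto intro: std_submodule_fscale twisted)
  finally have "fscale (inverse c) (fscale c (unit_fun (n + j))) \<in> W" by (rule std_submodule_fscale)
  moreover have "c \<noteq> 0" using j(2) n_pos by (simp add: c_def)
  ultimately have "unit_fun (n + j) \<in> W" by simp
  thus ?thesis using that j(1) by blast
qed

lemma std_submodule_contains_cvecs: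
  assumes j: "j < n" "unit_fun (n + j) \<in> W"
  shows "cvecs (2*n) \<subseteq> W"
proof -
  have orbit: "unit_fun (n + (j + q) mod n) \<in> W" for q
  proof (induct q)
    case 0 thus ?case using j by simp
  next
    case (Suc q)
    have "(j + q) mod n < n" using n_pos by simp
    hence "std_Y n (std_Z n (unit_fun (n + (j + q) mod n))) = unit_fun (n + (j + Suc q) mod n)"
      by (simp add: std_YZ_unit_fun[OF n_pos] mod_Suc_eq)
    thus ?case using W_invariant Suc by metis
  qed
  have upper: "unit_fun (n + b) \<in> W" if "b < n" for b
    using orbit[of "b + n - j"] that j by simp
  have lower: "unit_fun b \<in> W" if b: "b < n" for b
  proof -
    have "\<zeta> ^ b \<noteq> 0" using \<zeta>_root n_pos by (metis power_0_left power_eq_0_iff not_gr0 zero_neq_one)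
    hence "unit_fun b = fscale (inverse (\<zeta> ^ b)) (std_X n \<zeta> (unit_fun (n + b)))"
      by (simp add: std_X_unit_fun[OF b] fscale_eq_iff_inverse)
    thus ?thesis using std_submodule_fscale W_invariant upper[OF b] by metis
  qed
  show ?thesis
  proof (rule fsubspace_cvecs_subset[OF W])
    fix k assume "k < 2 * n"
    hence "k < n \<or> (k = n + (k - n) \<and> k - n < n)" by auto
    thus "unit_fun k \<in> W" using lower upper by metis
  qed
qed

end

lemma simple_rep_std_rep:
  fixes \<zeta> :: complex
  assumes n: "0 < n" and \<zeta>: "\<zeta> ^ n = 1" "\<And>k. 0 < k \<Longrightarrow> k < n \<Longrightarrow> \<zeta> ^ k \<noteq> 1"
  shows "simple_rep (2*n) (std_rep n \<zeta>)"
proof -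
  have "W = {0} \<or> W = cvecs (2*n)"
    if W: "fsubspace (2*n) W" "\<forall>f\<in>W. std_X n \<zeta> f \<in> W \<and> std_Y n f \<in> W \<and> std_Z n f \<in> W" for W
  proof (cases "\<exists>f\<in>W. f \<noteq> 0")
    case True
    then obtain f where "f \<in> W" "f \<noteq> 0" by blast
    then obtain g where "g \<in> W" "g \<noteq> 0" "\<And>k. k < n \<Longrightarrow> g k = 0"
      using std_submodule_upper_vector[OF n \<zeta> W(1)] W(2) by blast
    then obtain j where "j < n" "unit_fun (n + j) \<in> W"
      using std_submodule_unit_vector[OF n \<zeta> W(1)] W(2) by blast
    hence "cvecs (2*n) \<subseteq> W" using std_submodule_contains_cvecs[OF n \<zeta> W(1)] W(2) by blast
    thus ?thesis using W(1) by (auto simp: fsubspace_def)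
  qed (use W(1) in \<open>auto simp: fsubspace_def\<close>)
  thus ?thesis
    using n std_rep_carrier mat_op_std_rep[OF n, of \<zeta>] by (intro simple_repI_fsubspaces) (auto simp: all_less_three)
qed

theorem mainTheorem4:
  fixes \<omega> \<zeta> :: complex and n :: nat
  assumes "\<omega> ^ 3 = 1" and "\<omega> \<noteq> 1"
    and "n \<ge> 2"
    and "\<zeta> ^ n = 1" and "\<forall>k. 0 < k \<and> k < n \<longrightarrow> \<zeta> ^ k \<noteq> 1"
  shows "T_PI_degree \<omega> (- \<zeta>) = 2 * n"
proof -
  have n: "0 < n" using assms(3) by simp
  have \<zeta>: "\<zeta> ^ n = 1" "\<And>k. 0 < k \<Longrightarrow> k < n \<Longrightarrow> \<zeta> ^ k \<noteq> 1" using assms(4,5) by blast+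
  have "\<exists>A. T_rep \<omega> (- \<zeta>) (2*n) A \<and> simple_rep (2*n) A"
    using std_rep_T_rep[OF n \<zeta>(1)] simple_rep_std_rep[OF n \<zeta>] by blast
  moreover have "m \<le> 2 * n" if "T_rep \<omega> (- \<zeta>) m A" "simple_rep m A" for m A
    using simple_T_module.dim_le[OF T_rep_simple_T_module[OF assms(1,2) n \<zeta> that]] .
  ultimately show ?thesis
    unfolding T_PI_degree_def by (blast intro: Greatest_equality)
qed

end
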